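(* Let $\mathcal{A}$ be a von Neumann algebra with unit $I$ and $\tau$ a normal faithful normalized finite trace on $\mathcal{A}$, and let $T\in\mathcal{A}$ be positive with $\tau(T)=1$. Then for all $A,B\in\mathcal{A}$ and all $\alpha,\beta\in\mathbb{C}$: (1) $|\tau(TAB)-\tau(TA)\tau(TB)|\leq \|A-\alpha I\|_4\,\|B-\beta I\|_4\,\|T\|_2$; (2) $|\tau(TAB)-\tau(TA)\tau(TB)|\leq \|A-\alpha I\|_2\,\|B-\beta I\|_2\,\|T\|$; (3) $|\tau(TAB)-\tau(TA)\tau(TB)|\leq \|A-\alpha I\|\,\|B-\beta I\|$.
   Context: A finite trace $\tau$ on a von Neumann algebra is a positive linear functional with $\tau(I)<\infty$ and $\tau(XY)=\tau(YX)$; it is normal if $\sup_i\tau(X_i)=\tau(\sup_i X_i)$ for bounded increasing nets of positive elements, faithful if $\tau(X)=0$ for $X\ge 0$ implies $X=0$, and normalized if $\tau(I)=1$. For $1\le p<\infty$, $\|X\|_p=(\tau(|X|^p))^{1/p}$ with $|X|=(X^*X)^{1/2}$; $\|X\|$ denotes the operator norm. *)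

theory Defs
  imports "HOL-Analysis.Analysis" "HOL-Library.Function_Algebras"
begin

class chilbert = banach +
  fixes scaleC :: "complex \<Rightarrow> 'a \<Rightarrow> 'a"
    and cinner :: "'a \<Rightarrow> 'a \<Rightarrow> complex"
  assumes scaleC_add_right: "scaleC a (x + y) = scaleC a x + scaleC a y"
    and scaleC_add_left: "scaleC (a + b) x = scaleC a x + scaleC b x"
    and scaleC_scaleC: "scaleC a (scaleC b x) = scaleC (a * b) x"
    and scaleC_one: "scaleC 1 x = x"
    and scaleC_of_real: "scaleC (complex_of_real r) x = scaleR r x"
    and cinner_conj: "cinner x y = cnj (cinner y x)"
    and cinner_add_right: "cinner x (y + z) = cinner x y + cinner x z"
    and cinner_scaleC_right: "cinner x (scaleC a y) = a * cinner x y"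
    and cinner_self_norm: "cinner x x = complex_of_real ((norm x)\<^sup>2)"

definition bounded_op :: "('h::chilbert \<Rightarrow> 'h) \<Rightarrow> bool" where
  "bounded_op A \<longleftrightarrow>
     (\<forall>x y. A (x + y) = A x + A y) \<and>
     (\<forall>c x. A (scaleC c x) = scaleC c (A x)) \<and>
     (\<exists>K. \<forall>x. norm (A x) \<le> K * norm x)"

text \<open>Scalar multiple of an operator; \<open>op_scale c id\<close> is \<open>c I\<close>.\<close>
definition op_scale :: "complex \<Rightarrow> ('h::chilbert \<Rightarrow> 'h) \<Rightarrow> ('h \<Rightarrow> 'h)" where
  "op_scale c A = (\<lambda>x. scaleC c (A x))"

definition op_adjoint :: "('h::chilbert \<Rightarrow> 'h) \<Rightarrow> ('h \<Rightarrow> 'h)" where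
  "op_adjoint A = (THE B. \<forall>x y. cinner (A x) y = cinner x (B y))"

definition op_positive :: "('h::chilbert \<Rightarrow> 'h) \<Rightarrow> bool" where
  "op_positive A \<longleftrightarrow> bounded_op A \<and>
     (\<forall>x. cinner x (A x) \<in> \<real> \<and> 0 \<le> Re (cinner x (A x)))"

definition op_le :: "('h::chilbert \<Rightarrow> 'h) \<Rightarrow> ('h \<Rightarrow> 'h) \<Rightarrow> bool" where
  "op_le A B \<longleftrightarrow> op_positive (B - A)"

definition op_selfadjoint :: "('h::chilbert \<Rightarrow> 'h) \<Rightarrow> bool" where
  "op_selfadjoint A \<longleftrightarrow> bounded_op A \<and> op_adjoint A = A"

definition op_is_sup :: "('h::chilbert \<Rightarrow> 'h) set \<Rightarrow> ('h \<Rightarrow> 'h) \<Rightarrow> bool" where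
  "op_is_sup F S \<longleftrightarrow> op_selfadjoint S \<and> (\<forall>A\<in>F. op_le A S) \<and>
     (\<forall>U. op_selfadjoint U \<and> (\<forall>A\<in>F. op_le A U) \<longrightarrow> op_le S U)"

definition commutant :: "('h::chilbert \<Rightarrow> 'h) set \<Rightarrow> ('h \<Rightarrow> 'h) set" where
  "commutant S = {B. bounded_op B \<and> (\<forall>A\<in>S. B \<circ> A = A \<circ> B)}"

definition von_neumann_algebra :: "('h::chilbert \<Rightarrow> 'h) set \<Rightarrow> bool" where
  "von_neumann_algebra M \<longleftrightarrow>
     M \<subseteq> {A. bounded_op A} \<and> id \<in> M \<and>
     (\<forall>A\<in>M. \<forall>B\<in>M. A + B \<in> M \<and> A \<circ> B \<in> M) \<and>
     (\<forall>c. \<forall>A\<in>M. op_scale c A \<in> M) \<and>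
     (\<forall>A\<in>M. op_adjoint A \<in> M) \<and>
     commutant (commutant M) = M"

text \<open>A finite trace: a (complex-valued, hence finite) positive linear functional
on M with tau(XY) = tau(YX).\<close>
definition finite_trace :: "('h::chilbert \<Rightarrow> 'h) set \<Rightarrow> (('h \<Rightarrow> 'h) \<Rightarrow> complex) \<Rightarrow> bool" where
  "finite_trace M \<tau> \<longleftrightarrow>
     (\<forall>A\<in>M. \<forall>B\<in>M. \<tau> (A + B) = \<tau> A + \<tau> B) \<and>
     (\<forall>c. \<forall>A\<in>M. \<tau> (op_scale c A) = c * \<tau> A) \<and>
     (\<forall>A\<in>M. op_positive A \<longrightarrow> \<tau> A \<in> \<real> \<and> 0 \<le> Re (\<tau> A)) \<and>
     (\<forall>X\<in>M. \<forall>Y\<in>M. \<tau> (X \<circ> Y) = \<tau> (Y \<circ> X))"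

text \<open>Normality: for every bounded increasing net of positive elements of M
(equivalently, every nonempty upward directed, norm-bounded family of positive
elements, the net being indexed by itself), tau of the supremum is the supremum
of the values of tau.\<close>
definition normal_functional :: "('h::chilbert \<Rightarrow> 'h) set \<Rightarrow> (('h \<Rightarrow> 'h) \<Rightarrow> complex) \<Rightarrow> bool" where
  "normal_functional M \<tau> \<longleftrightarrow>
     (\<forall>F S. F \<subseteq> M \<and> F \<noteq> {} \<and> (\<forall>A\<in>F. op_positive A) \<and>
        (\<forall>A\<in>F. \<forall>B\<in>F. \<exists>C\<in>F. op_le A C \<and> op_le B C) \<and>
        (\<exists>K. \<forall>A\<in>F. onorm A \<le> K) \<and> op_is_sup F S
        \<longrightarrow> (SUP A\<in>F. Re (\<tau> A)) = Re (\<tau> S))"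

definition faithful_functional :: "('h::chilbert \<Rightarrow> 'h) set \<Rightarrow> (('h \<Rightarrow> 'h) \<Rightarrow> complex) \<Rightarrow> bool" where
  "faithful_functional M \<tau> \<longleftrightarrow> (\<forall>X\<in>M. op_positive X \<and> \<tau> X = 0 \<longrightarrow> X = 0)"

definition normalized_functional :: "(('h::chilbert \<Rightarrow> 'h) \<Rightarrow> complex) \<Rightarrow> bool" where
  "normalized_functional \<tau> \<longleftrightarrow> \<tau> id = 1"

definition op_abs :: "('h::chilbert \<Rightarrow> 'h) \<Rightarrow> ('h \<Rightarrow> 'h)" where
  "op_abs X = (THE Y. op_positive Y \<and> Y \<circ> Y = op_adjoint X \<circ> X)"

text \<open>||X||_p = tau(|X|^p)^{1/p}, for integer exponents p \<ge> 1 (only p = 2, 4 are needed).\<close>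
definition tr_pnorm :: "(('h::chilbert \<Rightarrow> 'h) \<Rightarrow> complex) \<Rightarrow> nat \<Rightarrow> ('h \<Rightarrow> 'h) \<Rightarrow> real" where
  "tr_pnorm \<tau> p X = (Re (\<tau> (op_abs X ^^ p))) powr (1 / real p)"

end

theory Submission
  imports Defs "HOL-Computational_Algebra.Formal_Power_Series"
begin

text \<open>Write \<open>\<omega> X = \<tau> (T \<circ> X)\<close>; the left-hand side is the covariance \<open>\<omega> (A B) - \<omega> A \<omega> B\<close>.
  Centring \<open>A\<close> at its mean \<open>\<omega> A\<close> and shifting \<open>B\<close> by \<open>\<beta>\<close> does not change it, so the
  Cauchy--Schwarz inequality for the positive form \<open>(X, Y) \<mapsto> \<omega> (Y\<^sup>* X)\<close> bounds it by
  \<open>\<parallel>(A - \<omega> A)\<^sup>*\<parallel>\<^sub>\<omega> \<parallel>B - \<beta>\<parallel>\<^sub>\<omega>\<close>, and centring at the mean minimises the first factor over all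
  shifts \<open>\<alpha>\<close>. It remains to bound \<open>\<parallel>Z\<parallel>\<^sub>\<omega>\<^sup>2 = \<tau> (T Z\<^sup>* Z)\<close> in three ways: by \<open>\<parallel>Z\<parallel>\<^sup>2\<close>, writing
  \<open>T = R\<^sup>2\<close> with \<open>R \<in> M\<close> (this is where \<open>M\<close> being its own bicommutant enters); by
  \<open>\<parallel>T\<parallel> \<parallel>Z\<parallel>\<^sub>2\<^sup>2\<close>; and by \<open>\<parallel>T\<parallel>\<^sub>2 \<parallel>Z\<parallel>\<^sub>4\<^sup>2\<close>, via Cauchy--Schwarz for \<open>\<tau>\<close>.

  The square root of a positive operator \<open>P\<close> is the binomial series of \<open>sqrt (1 - t)\<close>
  evaluated at \<open>I - P/s\<close>; adjoints come from the Riesz representation theorem.\<close>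

lemma cnj_mult_cmod: "cnj z * z = complex_of_real ((cmod z)\<^sup>2)"
  by (metis complex_norm_square of_real_power mult.commute)

lemma scaleC_zero_left [simp]: "scaleC 0 (x::'a::chilbert) = 0"
  by (metis scaleC_of_real of_real_0 scaleR_zero_left)

lemma scaleC_zero_right [simp]: "scaleC a (0::'a::chilbert) = 0"
  using scaleC_add_right[of a 0 0] by simp

lemma scaleC_minus_left: "scaleC (- a) (x::'a::chilbert) = - scaleC a x"
  using scaleC_add_left[of a "-a" x] by (simp add: eq_neg_iff_add_eq_0 add.commute)

lemma scaleC_minus1: "scaleC (-1) (x::'a::chilbert) = - x"
  using scaleC_minus_left[of 1 x] by (simp add: scaleC_one)

lemma scaleC_scaleR_commute: "scaleC c (r *\<^sub>R (x::'a::chilbert)) = r *\<^sub>R scaleC c x"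
  by (metis scaleC_of_real scaleC_scaleC mult.commute)

lemma cinner_add_left: "cinner ((x::'a::chilbert) + y) z = cinner x z + cinner y z"
  by (metis cinner_conj cinner_add_right complex_cnj_add)

lemma cinner_scaleC_left: "cinner (scaleC a (x::'a::chilbert)) y = cnj a * cinner x y"
  by (metis cinner_conj cinner_scaleC_right complex_cnj_mult complex_cnj_cnj)

lemma cinner_zero_left [simp]: "cinner 0 (y::'a::chilbert) = 0"
  using cinner_add_left[of 0 0 y] by simp

lemma cinner_zero_right [simp]: "cinner (x::'a::chilbert) 0 = 0"
  using cinner_add_right[of x 0 0] by simp

lemma cinner_minus_left: "cinner (- (x::'a::chilbert)) y = - cinner x y"
  using cinner_add_left[of x "-x" y] by (simp add: eq_neg_iff_add_eq_0 add.commute)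

lemma cinner_minus_right: "cinner (x::'a::chilbert) (- y) = - cinner x y"
  using cinner_add_right[of x y "-y"] by (simp add: eq_neg_iff_add_eq_0 add.commute)

lemma cinner_diff_left: "cinner ((x::'a::chilbert) - y) z = cinner x z - cinner y z"
  using cinner_add_left[of x "-y" z] by (simp add: cinner_minus_left)

lemma cinner_diff_right: "cinner (x::'a::chilbert) (y - z) = cinner x y - cinner x z"
  using cinner_add_right[of x y "-z"] by (simp add: cinner_minus_right)

lemma cinner_scaleR_left: "cinner (r *\<^sub>R (y::'a::chilbert)) x = complex_of_real r * cinner y x"
  by (metis cinner_scaleC_left scaleC_of_real complex_cnj_complex_of_real)

lemma cinner_scaleR_right: "cinner (y::'a::chilbert) (r *\<^sub>R x) = complex_of_real r * cinner y x"
  by (metis cinner_scaleC_right scaleC_of_real)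

lemma cinner_self_Im [simp]: "Im (cinner (x::'a::chilbert) x) = 0"
  by (simp add: cinner_self_norm)

lemma cinner_self_Re [simp]: "Re (cinner (x::'a::chilbert) x) = (norm x)\<^sup>2"
  by (simp add: cinner_self_norm)

lemma cinner_self_eq_0_iff: "cinner (x::'a::chilbert) x = 0 \<longleftrightarrow> x = 0"
  by (simp add: cinner_self_norm)

lemma cinner_ext: "(\<And>x. cinner x u = cinner x (v::'a::chilbert)) \<Longrightarrow> u = v"
  by (metis cinner_diff_right cinner_self_eq_0_iff diff_self eq_iff_diff_eq_0)

lemma norm_scaleC: "norm (scaleC a (x::'a::chilbert)) = cmod a * norm x"
proof -
  have "complex_of_real ((norm (scaleC a x))\<^sup>2) = cnj a * a * complex_of_real ((norm x)\<^sup>2)"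
    by (metis cinner_self_norm cinner_scaleC_left cinner_scaleC_right mult.assoc)
  then have "(norm (scaleC a x))\<^sup>2 = (cmod a * norm x)\<^sup>2"
    by (metis cnj_mult_cmod of_real_eq_iff of_real_mult power_mult_distrib)
  then show ?thesis by (simp add: power2_eq_iff_nonneg)
qed

lemma bounded_linear_scaleC: "bounded_linear (scaleC c :: 'a::chilbert \<Rightarrow> 'a)"
proof (rule bounded_linear_intro[where K="cmod c"])
  show "scaleC c (x + y) = scaleC c x + scaleC c y" for x y by (rule scaleC_add_right)
  show "scaleC c (r *\<^sub>R x) = r *\<^sub>R scaleC c x" for r x by (rule scaleC_scaleR_commute)
  show "norm (scaleC c x) \<le> norm x * cmod c" for x by (simp add: norm_scaleC mult.commute)
qed

text \<open>The scalar core of the Cauchy--Schwarz inequalities below, applied to a nonnegative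
  Hermitian form evaluated at \<open>x + c y\<close>.\<close>

lemma hermitian_quadratic_nonneg:
  fixes P R :: real and a b :: complex
  assumes im: "\<And>c. Im (c * a + cnj c * b) = 0"
    and nonneg: "\<And>c. 0 \<le> P + Re (c * a + cnj c * b) + (cmod c)\<^sup>2 * R"
    and "P \<ge> 0" "R \<ge> 0"
  shows "(cmod a)\<^sup>2 \<le> P * R" and "b = cnj a"
proof -
  show b: "b = cnj a"
    using im[of 1] im[of \<i>] by (simp add: complex_eq_iff)
  have key: "0 \<le> P + 2 * Re (c * a) + (cmod c)\<^sup>2 * R" for c
    using nonneg[of c] unfolding b by (simp add: mult.commute)
  show "(cmod a)\<^sup>2 \<le> P * R"
  proof (cases "R > 0")
    case True
    define c where "c = - cnj a / complex_of_real R"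
    have "c * a = - complex_of_real ((cmod a)\<^sup>2 / R)" and "cmod c = cmod a / R"
      unfolding c_def using True by (simp_all add: cnj_mult_cmod norm_divide)
    then have "0 \<le> P - 2 * ((cmod a)\<^sup>2 / R) + (cmod a / R)\<^sup>2 * R"
      using key[of c] by simp
    also have "(cmod a / R)\<^sup>2 * R = (cmod a)\<^sup>2 / R"
      using True by (simp add: power2_eq_square)
    finally show ?thesis using True by (simp add: field_simps)
  next
    case False
    with \<open>R \<ge> 0\<close> have "R = 0" by simp
    show ?thesis
    proof (cases "a = 0")
      case True
      then show ?thesis using \<open>P \<ge> 0\<close> \<open>R \<ge> 0\<close> by simp
    next
      case False
      \<comment> \<open>with \<open>R = 0\<close> the form is affine in \<open>c\<close>, so it cannot stay nonnegative unless \<open>a = 0\<close>\<close>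
      define c where "c = - complex_of_real ((P + 1) / (2 * (cmod a)\<^sup>2)) * cnj a"
      have "c * a = - complex_of_real ((P + 1) / (2 * (cmod a)\<^sup>2) * (cmod a)\<^sup>2)"
        unfolding c_def by (simp add: cnj_mult_cmod mult.assoc)
      also have "(P + 1) / (2 * (cmod a)\<^sup>2) * (cmod a)\<^sup>2 = (P + 1) / 2"
        using False by simp
      finally have "0 \<le> P + 2 * (- ((P + 1) / 2))" using key[of c] \<open>R = 0\<close> by simp
      then show ?thesis by simp
    qed
  qed
qed

lemma cinner_expand_quadratic:
  "cinner (x + scaleC c y) (x + scaleC c y)
     = cinner x x + (c * cinner x y + cnj c * cinner y x) + cnj c * c * cinner y (y::'a::chilbert)"
  by (simp add: cinner_add_left cinner_add_right cinner_scaleC_left cinner_scaleC_right algebra_simps)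

lemma norm_cinner_le: "cmod (cinner (x::'a::chilbert) y) \<le> norm x * norm y"
proof -
  have "(cmod (cinner x y))\<^sup>2 \<le> (norm x)\<^sup>2 * (norm y)\<^sup>2"
  proof (rule hermitian_quadratic_nonneg(1))
    fix c
    have "Im (cinner (x + scaleC c y) (x + scaleC c y)) = 0" by simp
    then show "Im (c * cinner x y + cnj c * cinner y x) = 0"
      unfolding cinner_expand_quadratic by (simp add: cnj_mult_cmod cinner_self_norm)
    have "0 \<le> Re (cinner (x + scaleC c y) (x + scaleC c y))" by simp
    then show "0 \<le> (norm x)\<^sup>2 + Re (c * cinner x y + cnj c * cinner y x) + (cmod c)\<^sup>2 * (norm y)\<^sup>2"
      unfolding cinner_expand_quadratic by (simp add: cnj_mult_cmod cinner_self_norm)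
  qed auto
  then show ?thesis
    by (simp add: power_mult_distrib[symmetric] power2_le_iff_abs_le)
qed

lemma bounded_linear_cinner_right: "bounded_linear (cinner (y::'a::chilbert))"
proof (rule bounded_linear_intro[where K="norm y"])
  show "cinner y (x + z) = cinner y x + cinner y z" for x z by (rule cinner_add_right)
  show "cinner y (r *\<^sub>R x) = r *\<^sub>R cinner y x" for r x
    by (simp add: cinner_scaleR_right scaleR_conv_of_real)
  show "norm (cinner y x) \<le> norm x * norm y" for x
    using norm_cinner_le[of y x] by (simp add: mult.commute)
qed

lemma parallelogram_law:
  "(norm ((x::'a::chilbert) + y))\<^sup>2 + (norm (x - y))\<^sup>2 = 2 * (norm x)\<^sup>2 + 2 * (norm y)\<^sup>2"
proof -
  have "cinner (x + y) (x + y) + cinner (x - y) (x - y) = 2 * cinner x x + 2 * cinner y y"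
    by (simp add: cinner_add_left cinner_add_right cinner_diff_left cinner_diff_right)
  then have "Re (cinner (x + y) (x + y) + cinner (x - y) (x - y)) = Re (2 * cinner x x + 2 * cinner y y)"
    by simp
  then show ?thesis by simp
qed

lemma bounded_opI:
  fixes A :: "'a::chilbert \<Rightarrow> 'a"
  assumes "\<And>x y. A (x + y) = A x + A y" "\<And>c x. A (scaleC c x) = scaleC c (A x)"
    and "\<And>x. norm (A x) \<le> K * norm x"
  shows "bounded_op A"
  using assms unfolding bounded_op_def by blast

lemma bounded_opD:
  assumes "bounded_op A"
  shows "A (x + y) = A x + A y" "A (scaleC c x) = scaleC c (A x)"
  using assms unfolding bounded_op_def by auto

lemma bounded_op_bounded_linear:
  fixes A :: "'a::chilbert \<Rightarrow> 'a"
  assumes "bounded_op A"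
  shows "bounded_linear A"
proof -
  from assms obtain K where K: "\<And>x. norm (A x) \<le> K * norm x"
    unfolding bounded_op_def by blast
  show ?thesis
  proof (rule bounded_linear_intro)
    show "A (x + y) = A x + A y" for x y using bounded_opD[OF assms] by simp
    show "A (r *\<^sub>R x) = r *\<^sub>R A x" for r x
      using bounded_opD(2)[OF assms, of "complex_of_real r" x] by (simp add: scaleC_of_real)
    show "norm (A x) \<le> norm x * K" for x using K[of x] by (simp add: mult.commute)
  qed
qed

lemma bounded_op_norm_le: "bounded_op A \<Longrightarrow> norm (A x) \<le> onorm A * norm x"
  by (rule onorm[OF bounded_op_bounded_linear])

lemma bounded_op_onorm_nonneg: "bounded_op A \<Longrightarrow> 0 \<le> onorm A"
  by (rule onorm_pos_le[OF bounded_op_bounded_linear])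

lemma bounded_op_diff: "bounded_op A \<Longrightarrow> A (x - y) = A x - A y"
  by (metis bounded_linear.linear bounded_op_bounded_linear linear_diff)

lemma bounded_op_scaleR: "bounded_op A \<Longrightarrow> A (r *\<^sub>R x) = r *\<^sub>R A x"
  by (metis bounded_opD(2) scaleC_of_real)

lemma bounded_op_suminf: "bounded_op A \<Longrightarrow> summable f \<Longrightarrow> A (suminf f) = (\<Sum>n. A (f n))"
  by (rule bounded_linear.suminf[OF bounded_op_bounded_linear])

lemma bounded_op_id: "bounded_op (id :: 'a::chilbert \<Rightarrow> 'a)"
  by (rule bounded_opI[where K=1]) auto

lemma bounded_op_comp:
  assumes A: "bounded_op A" and B: "bounded_op B"
  shows "bounded_op (A \<circ> B)"
proof (rule bounded_opI[where K="onorm A * onorm B"])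
  show "(A \<circ> B) (x + y) = (A \<circ> B) x + (A \<circ> B) y" for x y
    using bounded_opD[OF A] bounded_opD[OF B] by simp
  show "(A \<circ> B) (scaleC c x) = scaleC c ((A \<circ> B) x)" for c x
    using bounded_opD[OF A] bounded_opD[OF B] by simp
  show "norm ((A \<circ> B) x) \<le> onorm A * onorm B * norm x" for x
  proof -
    have "norm (A (B x)) \<le> onorm A * norm (B x)" by (rule bounded_op_norm_le[OF A])
    also have "\<dots> \<le> onorm A * (onorm B * norm x)"
      by (rule mult_left_mono[OF bounded_op_norm_le[OF B] bounded_op_onorm_nonneg[OF A]])
    finally show ?thesis by (simp add: mult.assoc)
  qed
qed

lemma bounded_op_funpow: "bounded_op A \<Longrightarrow> bounded_op (A ^^ n)"
  by (induction n) (auto intro: bounded_op_comp bounded_op_id)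

lemma bounded_op_add:
  assumes A: "bounded_op A" and B: "bounded_op B"
  shows "bounded_op (A + B)"
proof (rule bounded_opI[where K="onorm A + onorm B"])
  show "(A + B) (x + y) = (A + B) x + (A + B) y" for x y
    using bounded_opD[OF A] bounded_opD[OF B] by (simp add: algebra_simps)
  show "(A + B) (scaleC c x) = scaleC c ((A + B) x)" for c x
    using bounded_opD[OF A] bounded_opD[OF B] by (simp add: scaleC_add_right)
  show "norm ((A + B) x) \<le> (onorm A + onorm B) * norm x" for x
    using norm_triangle_ineq[of "A x" "B x"] bounded_op_norm_le[OF A, of x]
      bounded_op_norm_le[OF B, of x]
    by (simp add: algebra_simps)
qed

lemma op_scale_apply [simp]: "op_scale c A x = scaleC c (A x)"
  by (simp add: op_scale_def)

lemma bounded_op_scale: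
  assumes A: "bounded_op A"
  shows "bounded_op (op_scale c A)"
proof (rule bounded_opI[where K="cmod c * onorm A"])
  show "op_scale c A (x + y) = op_scale c A x + op_scale c A y" for x y
    using bounded_opD[OF A] by (simp add: scaleC_add_right)
  show "op_scale c A (scaleC d x) = scaleC d (op_scale c A x)" for d x
    using bounded_opD[OF A] by (simp add: scaleC_scaleC mult.commute)
  show "norm (op_scale c A x) \<le> cmod c * onorm A * norm x" for x
    using bounded_op_norm_le[OF A, of x] by (simp add: norm_scaleC mult.assoc mult_left_mono)
qed

lemma diff_eq_add_op_scale: "(A :: 'a::chilbert \<Rightarrow> 'a) - B = A + op_scale (-1) B"
  by (rule ext) (simp add: scaleC_minus1)

lemma bounded_op_minus:
  assumes "bounded_op A" "bounded_op B"
  shows "bounded_op (A - B)"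
  unfolding diff_eq_add_op_scale by (intro bounded_op_add bounded_op_scale assms)

lemma comp_diff_op_scale_id:
  assumes "bounded_op (F :: 'a::chilbert \<Rightarrow> 'a)"
  shows "F \<circ> (G - op_scale c id) = (F \<circ> G) - op_scale c F"
  by (rule ext) (simp add: bounded_op_diff[OF assms] bounded_opD(2)[OF assms])

section \<open>Riesz representation and adjoints\<close>

lemma Cauchy_minimizing_sequence:
  fixes k :: "nat \<Rightarrow> 'a::chilbert"
  assumes mid: "\<And>x y. x \<in> E \<Longrightarrow> y \<in> E \<Longrightarrow> scaleC (1/2) (x + y) \<in> E"
    and lower: "\<And>x. x \<in> E \<Longrightarrow> d \<le> norm x" and "0 \<le> d"
    and kE: "\<And>n. k n \<in> E" and kn: "\<And>n. norm (k n) < d + 1 / (real n + 1)"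
  shows "Cauchy k"
proof -
  have sq: "(norm (k n))\<^sup>2 \<le> d\<^sup>2 + (2 * d + 1) / (real n + 1)" for n
  proof -
    define e where "e = 1 / (real n + 1)"
    have e: "0 < e" "e \<le> 1" unfolding e_def by auto
    have "(norm (k n))\<^sup>2 \<le> (d + e)\<^sup>2"
      using kn[of n] unfolding e_def by (intro power_mono) auto
    also have "\<dots> \<le> d\<^sup>2 + 2 * d * e + e"
      using e mult_right_mono[of e 1 e] by (simp add: power2_eq_square algebra_simps)
    finally show ?thesis unfolding e_def by (simp add: field_simps)
  qed
  \<comment> \<open>the midpoint of \<open>k n\<close> and \<open>k m\<close> lies in \<open>E\<close>, so the parallelogram law forces \<open>k n - k m\<close> to be small\<close>
  have diff: "(norm (k n - k m))\<^sup>2 \<le> 2 * ((2 * d + 1) / (real n + 1)) + 2 * ((2 * d + 1) / (real m + 1))"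
    for n m
  proof -
    have "d \<le> norm (scaleC (1/2) (k n + k m))" by (rule lower[OF mid[OF kE kE]])
    then have "2 * d \<le> norm (k n + k m)" by (simp add: norm_scaleC)
    then have "(2 * d)\<^sup>2 \<le> (norm (k n + k m))\<^sup>2" using \<open>0 \<le> d\<close> by (intro power_mono) auto
    then have "4 * d\<^sup>2 \<le> (norm (k n + k m))\<^sup>2" by (simp add: power_mult_distrib)
    then show ?thesis using parallelogram_law[of "k n" "k m"] sq[of n] sq[of m] by linarith
  qed
  show "Cauchy k"
  proof (rule metric_CauchyI)
    fix e :: real
    assume e: "e > 0"
    obtain N :: nat where N: "4 * (2 * d + 1) / e\<^sup>2 < real N"
      using reals_Archimedean2 by blast
    have pos: "0 < 2 * d + 1" using \<open>0 \<le> d\<close> by simp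
    have "dist (k m) (k n) < e" if mn: "N \<le> m" "N \<le> n" for m n
    proof -
      have bnd: "(2 * d + 1) / (real j + 1) \<le> (2 * d + 1) / (real N + 1)" if "N \<le> j" for j
        using that pos by (intro divide_left_mono) auto
      have "(dist (k m) (k n))\<^sup>2 \<le> 4 * ((2 * d + 1) / (real N + 1))"
        using diff[of m n] bnd[OF mn(1)] bnd[OF mn(2)] unfolding dist_norm by linarith
      also have "\<dots> < e\<^sup>2"
      proof -
        have "4 * (2 * d + 1) < e\<^sup>2 * (real N + 1)"
          using N e by (simp add: field_simps) (smt (verit) zero_less_power)
        then show ?thesis using pos by (simp add: field_simps)
      qed
      finally show ?thesis using e by (simp add: power_less_imp_less_base)
    qed
    then show "\<exists>M. \<forall>m\<ge>M. \<forall>n\<ge>M. dist (k m) (k n) < e" by blast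
  qed
qed

lemma level_set_min_norm_exists:
  fixes f :: "'a::chilbert \<Rightarrow> complex"
  assumes f: "bounded_linear f" "\<And>c x. f (scaleC c x) = c * f x" and "f u \<noteq> 0"
  shows "\<exists>w. f w = 1 \<and> (\<forall>x. f x = 1 \<longrightarrow> norm w \<le> norm x)"
proof -
  define E where "E = {x. f x = 1}"
  have u: "scaleC (1 / f u) u \<in> E" unfolding E_def using assms by simp
  define d where "d = Inf (norm ` E)"
  have bdd: "bdd_below (norm ` E)" by (rule bdd_belowI[of _ 0]) auto
  have lower: "d \<le> norm x" if "x \<in> E" for x
    unfolding d_def using that bdd by (simp add: cInf_lower)
  have "0 \<le> d" unfolding d_def using u by (intro cInf_greatest) auto
  have mid: "scaleC (1/2) (x + y) \<in> E" if "x \<in> E" "y \<in> E" for x y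
    using that f unfolding E_def by (simp add: linear_add bounded_linear.linear)
  have "\<exists>x. x \<in> E \<and> norm x < d + 1 / (real n + 1)" for n
  proof -
    have "Inf (norm ` E) < d + 1 / (real n + 1)" unfolding d_def by simp
    then show ?thesis using cInf_lessD[of "norm ` E"] u by blast
  qed
  then obtain k where kE: "\<And>n. k n \<in> E" and kn: "\<And>n. norm (k n) < d + 1 / (real n + 1)"
    by metis
  have "Cauchy k" by (rule Cauchy_minimizing_sequence[OF mid lower \<open>0 \<le> d\<close> kE kn])
  then obtain w where kw: "k \<longlonglongrightarrow> w" using Cauchy_convergent_iff convergent_def by blast
  have "(\<lambda>n. f (k n)) \<longlonglongrightarrow> f w" by (rule bounded_linear.tendsto[OF f(1) kw])
  moreover have "(\<lambda>n. f (k n)) = (\<lambda>n. 1)" using kE unfolding E_def by auto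
  ultimately have "f w = 1" using LIMSEQ_const_iff by metis
  moreover have "norm w \<le> norm x" if "f x = 1" for x
  proof -
    have "(\<lambda>n. d + 1 / (real n + 1)) \<longlonglongrightarrow> d + 0"
      using LIMSEQ_inverse_real_of_nat by (intro tendsto_add tendsto_const) (simp add: inverse_eq_divide add.commute)
    then have "norm w \<le> d + 0"
      using tendsto_norm[OF kw] kn by (intro LIMSEQ_le[where X="\<lambda>n. norm (k n)"]) (auto intro: less_imp_le)
    then show ?thesis using lower[of x] that unfolding E_def by simp
  qed
  ultimately show ?thesis by blast
qed

lemma level_set_min_norm_orthogonal:
  fixes f :: "'a::chilbert \<Rightarrow> complex"
  assumes f: "bounded_linear f" "\<And>c x. f (scaleC c x) = c * f x"
    and w: "f w = 1" "\<And>x. f x = 1 \<Longrightarrow> norm w \<le> norm x" and "f y = 0"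
  shows "cinner w y = 0"
proof -
  have "(cmod (cinner w y))\<^sup>2 \<le> 0 * (norm y)\<^sup>2"
  proof (rule hermitian_quadratic_nonneg(1))
    fix c
    have "Im (cinner (w + scaleC c y) (w + scaleC c y)) = 0" by simp
    then show "Im (c * cinner w y + cnj c * cinner y w) = 0"
      unfolding cinner_expand_quadratic by (simp add: cnj_mult_cmod cinner_self_norm)
    have "f (w + scaleC c y) = 1"
      using f w \<open>f y = 0\<close> by (simp add: linear_add bounded_linear.linear)
    then have "(norm w)\<^sup>2 \<le> (norm (w + scaleC c y))\<^sup>2" using w(2) by (simp add: power_mono)
    also have "\<dots> = Re (cinner (w + scaleC c y) (w + scaleC c y))" by simp
    finally show "0 \<le> 0 + Re (c * cinner w y + cnj c * cinner y w) + (cmod c)\<^sup>2 * (norm y)\<^sup>2"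
      unfolding cinner_expand_quadratic by (simp add: cnj_mult_cmod cinner_self_norm)
  qed auto
  then show ?thesis by simp
qed

text \<open>The representing vector is a rescaled element of minimal norm on \<open>{x. f x = 1}\<close>.\<close>

lemma riesz_representation:
  fixes f :: "'a::chilbert \<Rightarrow> complex"
  assumes f: "bounded_linear f" "\<And>c x. f (scaleC c x) = c * f x"
  shows "\<exists>z. \<forall>x. f x = cinner z x"
proof (cases "\<forall>x. f x = 0")
  case True
  then show ?thesis by (intro exI[of _ 0]) simp
next
  case False
  then obtain w where w: "f w = 1" "\<And>x. f x = 1 \<Longrightarrow> norm w \<le> norm x"
    using level_set_min_norm_exists[OF f] by blast
  have "w \<noteq> 0" using w(1) f(1) by (metis bounded_linear.linear linear_0 zero_neq_one)
  have "f x = cinner (scaleC (complex_of_real (1 / (norm w)\<^sup>2)) w) x" for x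
  proof -
    have "f (x - scaleC (f x) w) = 0"
      using f w(1) by (simp add: linear_diff bounded_linear.linear)
    then have "cinner w (x - scaleC (f x) w) = 0"
      using level_set_min_norm_orthogonal[OF f w] by blast
    then have "cinner w x = f x * complex_of_real ((norm w)\<^sup>2)"
      by (simp add: cinner_diff_right cinner_scaleC_right cinner_self_norm)
    then have "f x = cinner w x / complex_of_real ((norm w)\<^sup>2)" using \<open>w \<noteq> 0\<close> by simp
    then show ?thesis by (simp add: cinner_scaleC_left divide_inverse mult.commute)
  qed
  then show ?thesis by blast
qed

lemma adjoint_exists:
  fixes A :: "'a::chilbert \<Rightarrow> 'a"
  assumes A: "bounded_op A"
  shows "\<exists>B. \<forall>x y. cinner (A x) y = cinner x (B y)"
proof -
  have "\<exists>z. \<forall>x. cinner y (A x) = cinner z x" for y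
  proof (rule riesz_representation)
    show "bounded_linear (\<lambda>x. cinner y (A x))"
      using bounded_linear_compose[OF bounded_linear_cinner_right bounded_op_bounded_linear[OF A]]
      by (simp add: o_def)
    show "cinner y (A (scaleC c x)) = c * cinner y (A x)" for c x
      using bounded_opD(2)[OF A] by (simp add: cinner_scaleC_right)
  qed
  then obtain B where "\<And>y x. cinner y (A x) = cinner (B y) x" by metis
  then have "cinner (A x) y = cinner x (B y)" for x y by (metis cinner_conj)
  then show ?thesis by blast
qed

lemma cinner_adjoint:
  fixes A :: "'a::chilbert \<Rightarrow> 'a"
  assumes "bounded_op A"
  shows "cinner (A x) y = cinner x (op_adjoint A y)"
proof -
  have "B = C" if "\<forall>x y. cinner (A x) y = cinner x (B y)" "\<forall>x y. cinner (A x) y = cinner x (C y)"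
    for B C
    using that by (intro ext cinner_ext) metis
  then have "\<exists>!B. \<forall>x y. cinner (A x) y = cinner x (B y)"
    using adjoint_exists[OF assms] by blast
  then have "\<forall>x y. cinner (A x) y = cinner x (op_adjoint A y)"
    unfolding op_adjoint_def by (rule theI')
  then show ?thesis by blast
qed

lemma cinner_adjoint':
  fixes A :: "'a::chilbert \<Rightarrow> 'a"
  assumes "bounded_op A"
  shows "cinner x (A y) = cinner (op_adjoint A x) y"
  by (metis cinner_adjoint[OF assms] cinner_conj)

lemma op_adjoint_eqI:
  fixes A :: "'a::chilbert \<Rightarrow> 'a"
  assumes "bounded_op A" "\<And>x y. cinner (A x) y = cinner x (B y)"
  shows "op_adjoint A = B"
proof (intro ext cinner_ext)
  show "cinner x (op_adjoint A y) = cinner x (B y)" for x y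
    using assms(2)[of x y] cinner_adjoint[OF assms(1), of x y] by simp
qed

lemma norm_op_adjoint_le:
  fixes A :: "'a::chilbert \<Rightarrow> 'a"
  assumes A: "bounded_op A"
  shows "norm (op_adjoint A y) \<le> onorm A * norm y"
proof (cases "op_adjoint A y = 0")
  case True
  then show ?thesis using bounded_op_onorm_nonneg[OF A] by simp
next
  case False
  let ?z = "op_adjoint A y"
  have "(norm ?z)\<^sup>2 = Re (cinner (A ?z) y)" by (simp add: cinner_adjoint[OF A])
  also have "\<dots> \<le> norm (A ?z) * norm y" by (rule order_trans[OF complex_Re_le_cmod norm_cinner_le])
  also have "\<dots> \<le> onorm A * norm ?z * norm y"
    by (rule mult_right_mono[OF bounded_op_norm_le[OF A]]) simp
  finally have "norm ?z * norm ?z \<le> norm ?z * (onorm A * norm y)"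
    by (simp add: power2_eq_square mult_ac)
  then show ?thesis using False by simp
qed

lemma bounded_op_adjoint:
  fixes A :: "'a::chilbert \<Rightarrow> 'a"
  assumes A: "bounded_op A"
  shows "bounded_op (op_adjoint A)"
proof (rule bounded_opI[where K="onorm A"])
  show "op_adjoint A (x + y) = op_adjoint A x + op_adjoint A y" for x y
    by (rule cinner_ext) (simp add: cinner_adjoint[OF A, symmetric] cinner_add_right)
  show "op_adjoint A (scaleC c x) = scaleC c (op_adjoint A x)" for c x
    by (rule cinner_ext) (simp add: cinner_adjoint[OF A, symmetric] cinner_scaleC_right)
qed (rule norm_op_adjoint_le[OF A])

lemma op_adjoint_adjoint:
  fixes A :: "'a::chilbert \<Rightarrow> 'a"
  assumes "bounded_op A"
  shows "op_adjoint (op_adjoint A) = A"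
  by (rule op_adjoint_eqI[OF bounded_op_adjoint[OF assms]]) (simp add: cinner_adjoint'[OF assms])

lemma op_adjoint_comp:
  fixes A B :: "'a::chilbert \<Rightarrow> 'a"
  assumes "bounded_op A" "bounded_op B"
  shows "op_adjoint (A \<circ> B) = op_adjoint B \<circ> op_adjoint A"
  by (rule op_adjoint_eqI[OF bounded_op_comp[OF assms]]) (simp add: cinner_adjoint assms)

lemma op_adjoint_add:
  fixes A B :: "'a::chilbert \<Rightarrow> 'a"
  assumes "bounded_op A" "bounded_op B"
  shows "op_adjoint (A + B) = op_adjoint A + op_adjoint B"
  by (rule op_adjoint_eqI[OF bounded_op_add[OF assms]])
    (simp add: cinner_adjoint assms cinner_add_left cinner_add_right)

lemma op_adjoint_scale:
  fixes A :: "'a::chilbert \<Rightarrow> 'a"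
  assumes "bounded_op A"
  shows "op_adjoint (op_scale c A) = op_scale (cnj c) (op_adjoint A)"
  by (rule op_adjoint_eqI[OF bounded_op_scale[OF assms]])
    (simp add: cinner_adjoint[OF assms] cinner_scaleC_left cinner_scaleC_right)

lemma op_adjoint_id: "op_adjoint (id :: 'a::chilbert \<Rightarrow> 'a) = id"
  by (rule op_adjoint_eqI[OF bounded_op_id]) simp

lemma op_adjoint_diff:
  fixes A B :: "'a::chilbert \<Rightarrow> 'a"
  assumes "bounded_op A" "bounded_op B"
  shows "op_adjoint (A - B) = op_adjoint A - op_adjoint B"
  unfolding diff_eq_add_op_scale using assms
  by (simp add: op_adjoint_add op_adjoint_scale bounded_op_scale)

lemma onorm_op_adjoint:
  fixes A :: "'a::chilbert \<Rightarrow> 'a"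
  assumes A: "bounded_op A"
  shows "onorm (op_adjoint A) = onorm A"
proof -
  have le: "onorm (op_adjoint B) \<le> onorm B" if "bounded_op B" for B :: "'a \<Rightarrow> 'a"
    by (rule onorm_bound[OF bounded_op_onorm_nonneg norm_op_adjoint_le]) (use that in auto)
  show ?thesis
    using le[OF A] le[OF bounded_op_adjoint[OF A]] op_adjoint_adjoint[OF A] by simp
qed

lemma op_positiveI:
  fixes A :: "'a::chilbert \<Rightarrow> 'a"
  assumes "bounded_op A" "\<And>x. Im (cinner x (A x)) = 0" "\<And>x. 0 \<le> Re (cinner x (A x))"
  shows "op_positive A"
  using assms unfolding op_positive_def by (auto simp: complex_is_Real_iff)

lemma op_positive_bounded: "op_positive A \<Longrightarrow> bounded_op A"
  unfolding op_positive_def by blast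

lemma op_positive_Im: "op_positive A \<Longrightarrow> Im (cinner x (A x)) = 0"
  unfolding op_positive_def by (auto simp: complex_is_Real_iff)

lemma op_positive_Re: "op_positive A \<Longrightarrow> 0 \<le> Re (cinner x (A x))"
  unfolding op_positive_def by auto

lemma op_positive_id: "op_positive (id :: 'a::chilbert \<Rightarrow> 'a)"
  by (rule op_positiveI[OF bounded_op_id]) auto

lemma op_positive_sandwich:
  fixes K X :: "'a::chilbert \<Rightarrow> 'a"
  assumes K: "op_positive K" and X: "bounded_op X"
  shows "op_positive (op_adjoint X \<circ> K \<circ> X)"
proof (rule op_positiveI)
  show "bounded_op (op_adjoint X \<circ> K \<circ> X)"
    by (intro bounded_op_comp bounded_op_adjoint X op_positive_bounded[OF K])
  have "cinner x ((op_adjoint X \<circ> K \<circ> X) x) = cinner (X x) (K (X x))" for x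
    by (simp add: cinner_adjoint[OF X])
  then show "Im (cinner x ((op_adjoint X \<circ> K \<circ> X) x)) = 0"
    and "0 \<le> Re (cinner x ((op_adjoint X \<circ> K \<circ> X) x))" for x
    using op_positive_Im[OF K] op_positive_Re[OF K] by simp_all
qed

lemma op_positive_cauchy_schwarz:
  fixes A :: "'a::chilbert \<Rightarrow> 'a"
  assumes P: "op_positive A"
  shows "(cmod (cinner x (A y)))\<^sup>2 \<le> Re (cinner x (A x)) * Re (cinner y (A y))"
    and "cinner y (A x) = cnj (cinner x (A y))"
proof -
  have A: "bounded_op A" using op_positive_bounded[OF P] .
  have expand: "cinner (x + scaleC c y) (A (x + scaleC c y))
     = cinner x (A x) + (c * cinner x (A y) + cnj c * cinner y (A x)) + cnj c * c * cinner y (A y)"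
    for c
    using bounded_opD[OF A]
    by (simp add: cinner_add_left cinner_add_right cinner_scaleC_left cinner_scaleC_right algebra_simps)
  have im: "Im (c * cinner x (A y) + cnj c * cinner y (A x)) = 0" for c
    using op_positive_Im[OF P, of "x + scaleC c y"] op_positive_Im[OF P, of x]
      op_positive_Im[OF P, of y]
    unfolding expand by (simp add: cnj_mult_cmod)
  have nonneg: "0 \<le> Re (cinner x (A x)) + Re (c * cinner x (A y) + cnj c * cinner y (A x))
      + (cmod c)\<^sup>2 * Re (cinner y (A y))" for c
    using op_positive_Re[OF P, of "x + scaleC c y"] op_positive_Im[OF P, of y]
    unfolding expand by (simp add: cnj_mult_cmod)
  show "(cmod (cinner x (A y)))\<^sup>2 \<le> Re (cinner x (A x)) * Re (cinner y (A y))"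
    and "cinner y (A x) = cnj (cinner x (A y))"
    using hermitian_quadratic_nonneg[OF im nonneg] op_positive_Re[OF P] by auto
qed

lemma op_positive_selfadjoint:
  fixes A :: "'a::chilbert \<Rightarrow> 'a"
  assumes P: "op_positive A"
  shows "op_adjoint A = A"
proof (rule op_adjoint_eqI[OF op_positive_bounded[OF P]])
  show "cinner (A x) y = cinner x (A y)" for x y
    using op_positive_cauchy_schwarz(2)[OF P, of y x] by (metis cinner_conj)
qed

lemma op_positive_cinner_commute:
  fixes A :: "'a::chilbert \<Rightarrow> 'a"
  assumes "op_positive A"
  shows "cinner (A x) y = cinner x (A y)"
  using cinner_adjoint[OF op_positive_bounded[OF assms]] op_positive_selfadjoint[OF assms] by simp

lemma op_positive_form_eq_0:
  fixes A :: "'a::chilbert \<Rightarrow> 'a"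
  assumes P: "op_positive A" and "Re (cinner x (A x)) = 0"
  shows "A x = 0"
proof -
  have "(cmod (cinner (A x) (A x)))\<^sup>2 \<le> Re (cinner (A x) (A (A x))) * Re (cinner x (A x))"
    by (rule op_positive_cauchy_schwarz(1)[OF P])
  then show ?thesis using assms(2) by (simp add: cinner_self_eq_0_iff)
qed

lemma Re_cinner_le_onorm:
  fixes A :: "'a::chilbert \<Rightarrow> 'a"
  assumes A: "bounded_op A"
  shows "Re (cinner x (A x)) \<le> onorm A * (norm x)\<^sup>2"
proof -
  have "Re (cinner x (A x)) \<le> norm x * norm (A x)"
    by (rule order_trans[OF complex_Re_le_cmod norm_cinner_le])
  also have "\<dots> \<le> norm x * (onorm A * norm x)"
    by (rule mult_left_mono[OF bounded_op_norm_le[OF A]]) simp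
  finally show ?thesis by (simp add: power2_eq_square mult_ac)
qed

lemma op_positive_onorm_minus:
  fixes K :: "'a::chilbert \<Rightarrow> 'a"
  assumes K: "op_positive K"
  shows "op_positive (op_scale (complex_of_real (onorm K)) id - K)"
proof (rule op_positiveI)
  have Kb: "bounded_op K" using op_positive_bounded[OF K] .
  show "bounded_op (op_scale (complex_of_real (onorm K)) id - K)"
    by (intro bounded_op_minus bounded_op_scale bounded_op_id Kb)
  have e: "cinner x ((op_scale (complex_of_real (onorm K)) id - K) x)
      = complex_of_real (onorm K * (norm x)\<^sup>2) - cinner x (K x)" for x
    by (simp add: cinner_diff_right cinner_scaleC_right cinner_self_norm)
  show "Im (cinner x ((op_scale (complex_of_real (onorm K)) id - K) x)) = 0"
    and "0 \<le> Re (cinner x ((op_scale (complex_of_real (onorm K)) id - K) x))" for x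
    unfolding e using op_positive_Im[OF K] Re_cinner_le_onorm[OF Kb] by simp_all
qed

lemma op_positive_onorm_sq_minus_adjoint_comp:
  fixes Z :: "'a::chilbert \<Rightarrow> 'a"
  assumes Z: "bounded_op Z"
  shows "op_positive (op_scale (complex_of_real ((onorm Z)\<^sup>2)) id - (op_adjoint Z \<circ> Z))"
proof (rule op_positiveI)
  show "bounded_op (op_scale (complex_of_real ((onorm Z)\<^sup>2)) id - (op_adjoint Z \<circ> Z))"
    by (intro bounded_op_minus bounded_op_scale bounded_op_id bounded_op_comp bounded_op_adjoint Z)
  have e: "cinner x ((op_scale (complex_of_real ((onorm Z)\<^sup>2)) id - (op_adjoint Z \<circ> Z)) x)
      = complex_of_real ((onorm Z)\<^sup>2 * (norm x)\<^sup>2 - (norm (Z x))\<^sup>2)" for x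
    using cinner_adjoint[OF Z, of x "Z x"]
    by (simp add: cinner_diff_right cinner_scaleC_right cinner_self_norm)
  have "(norm (Z x))\<^sup>2 \<le> (onorm Z * norm x)\<^sup>2" for x
    using bounded_op_norm_le[OF Z, of x] by (intro power_mono) auto
  then show "Im (cinner x ((op_scale (complex_of_real ((onorm Z)\<^sup>2)) id - (op_adjoint Z \<circ> Z)) x)) = 0"
    and "0 \<le> Re (cinner x ((op_scale (complex_of_real ((onorm Z)\<^sup>2)) id - (op_adjoint Z \<circ> Z)) x))" for x
    unfolding e by (simp_all add: power_mult_distrib)
qed

section \<open>Square roots of positive operators\<close>

text \<open>The coefficients of the binomial series \<open>sqrt (1 - t) = (\<Sum>n. sqrt_coeff n * t ^ n)\<close>.\<close>

definition sqrt_coeff :: "nat \<Rightarrow> real" where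
  "sqrt_coeff n = (-1) ^ n * ((1/2 :: real) gchoose n)"

lemma gbinomial_Suc_eq: "(a::real) gchoose (Suc k) = (a gchoose k) * (a - of_nat k) / of_nat (Suc k)"
  using gbinomial_mult_1[of a k] by (simp add: field_simps del: of_nat_Suc)

lemma sqrt_coeff_0 [simp]: "sqrt_coeff 0 = 1"
  by (simp add: sqrt_coeff_def)

lemma sqrt_coeff_Suc: "sqrt_coeff (Suc n) = sqrt_coeff n * (real n - 1/2) / real (Suc n)"
  unfolding sqrt_coeff_def gbinomial_Suc_eq by (simp add: field_simps)

lemma sqrt_coeff_nonpos: "n \<ge> 1 \<Longrightarrow> sqrt_coeff n \<le> 0"
proof (induction n)
  case (Suc n)
  then show ?case
    by (cases "n = 0")
      (auto simp: sqrt_coeff_Suc intro!: divide_nonpos_nonneg mult_nonpos_nonneg)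
qed simp

lemma sum_sqrt_coeff_nonneg: "0 \<le> (\<Sum>k\<le>m. sqrt_coeff k)"
proof -
  have "(\<Sum>k\<le>m. sqrt_coeff k) = (- 1) ^ m * ((1/2::real) - 1 gchoose m)"
    using gbinomial_sum_lower_neg[of "1/2::real" m] by (simp add: sqrt_coeff_def mult.commute)
  also have "0 \<le> (- 1) ^ m * ((1/2::real) - 1 gchoose m)"
  proof (induction m)
    case (Suc m)
    have "(- 1) ^ Suc m * ((1/2::real) - 1 gchoose Suc m)
       = ((- 1) ^ m * ((1/2::real) - 1 gchoose m)) * ((real m + 1/2) / real (Suc m))"
      unfolding gbinomial_Suc_eq by (simp add: field_simps)
    then show ?case using Suc by simp
  qed simp
  finally show ?thesis .
qed

lemma sum_abs_sqrt_coeff: "(\<Sum>k\<le>m. \<bar>sqrt_coeff k\<bar>) = 2 - (\<Sum>k\<le>m. sqrt_coeff k)"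
proof (induction m)
  case (Suc m)
  then show ?case using sqrt_coeff_nonpos[of "Suc m"] by simp
qed simp

lemma summable_abs_sqrt_coeff: "summable (\<lambda>n. \<bar>sqrt_coeff n\<bar>)"
  by (rule bounded_imp_summable[where B=2]) (use sum_abs_sqrt_coeff sum_sqrt_coeff_nonneg in auto)

lemma summable_sqrt_coeff: "summable sqrt_coeff"
  using summable_abs_sqrt_coeff summable_rabs_cancel by blast

lemma suminf_sqrt_coeff_nonneg: "0 \<le> suminf sqrt_coeff"
proof (rule LIMSEQ_le_const[OF summable_LIMSEQ[OF summable_sqrt_coeff]])
  have "0 \<le> (\<Sum>k<n. sqrt_coeff k)" for n
    using sum_sqrt_coeff_nonneg[of "n - 1"] by (cases n) (simp_all add: lessThan_Suc_atMost)
  then show "\<exists>N. \<forall>n\<ge>N. 0 \<le> (\<Sum>k<n. sqrt_coeff k)" by blast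
qed

text \<open>Squaring the series gives \<open>1 - t\<close> (Vandermonde's identity for \<open>1/2 + 1/2 = 1\<close>).\<close>

lemma sqrt_coeff_convolution:
  "(\<Sum>k\<le>n. sqrt_coeff k * sqrt_coeff (n - k)) = (if n = 0 then 1 else if n = 1 then -1 else 0)"
proof -
  have "(\<Sum>k\<le>n. sqrt_coeff k * sqrt_coeff (n - k))
      = (\<Sum>k\<le>n. (-1)^n * (((1/2::real) gchoose k) * ((1/2) gchoose (n - k))))"
  proof (intro sum.cong refl)
    fix k assume "k \<in> {..n}"
    then have "(-1::real)^k * (-1)^(n-k) = (-1)^n" by (simp add: power_add[symmetric])
    then show "sqrt_coeff k * sqrt_coeff (n - k) = (-1)^n * (((1/2::real) gchoose k) * ((1/2) gchoose (n - k)))"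
      unfolding sqrt_coeff_def by (metis (no_types, lifting) mult.assoc mult.left_commute)
  qed
  also have "\<dots> = (-1)^n * ((1/2 + 1/2::real) gchoose n)"
    by (simp add: sum_distrib_left[symmetric] gbinomial_Vandermonde atMost_atLeast0)
  also have "(1/2 + 1/2::real) gchoose n = of_nat (1 choose n)"
    by (simp add: binomial_gbinomial)
  finally show ?thesis
    by (cases n; cases "n - 1") (auto simp: binomial_eq_0)
qed

lemma suminf_eq_infsum:
  fixes f :: "nat \<Rightarrow> 'a::banach"
  assumes "summable (\<lambda>n. norm (f n))"
  shows "suminf f = infsum f UNIV"
  using norm_summable_imp_has_sum[OF assms summable_sums[OF summable_norm_cancel[OF assms]]]
  by (simp add: infsumI)

lemma bij_betw_antidiagonal:
  "bij_betw (\<lambda>(N::nat, k). (k, N - k)) (SIGMA N:UNIV. {..N}) (UNIV \<times> UNIV)"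
proof -
  have "(n, m) \<in> (\<lambda>(N::nat, k). (k, N - k)) ` (SIGMA N:UNIV. {..N})" for n m
    by (rule image_eqI[where x="(n + m, n)"]) auto
  then show ?thesis by (auto simp: bij_betw_def inj_on_def image_iff)
qed

lemma summable_on_product_shift:
  fixes a :: "nat \<Rightarrow> real" and v :: "nat \<Rightarrow> 'a::banach"
  assumes a: "summable (\<lambda>n. \<bar>a n\<bar>)" and v: "\<And>n. norm (v n) \<le> C"
  shows "(\<lambda>(n, m). (a n * a m) *\<^sub>R v (n + m)) summable_on UNIV \<times> UNIV"
proof -
  have "0 \<le> C" using v[of 0] norm_ge_zero order.trans by blast
  obtain S where aS: "((\<lambda>n. \<bar>a n\<bar>) has_sum S) UNIV"
    using a norm_summable_imp_has_sum[of "\<lambda>n. \<bar>a n\<bar>"] summable_sums by force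
  have "(\<lambda>(n,m). \<bar>a n\<bar> * \<bar>a m\<bar>) summable_on (SIGMA n:UNIV. UNIV)"
  proof (rule summable_on_SigmaI[where g="\<lambda>n. \<bar>a n\<bar> * S"])
    show "((\<lambda>m. case (n, m) of (n, m) \<Rightarrow> \<bar>a n\<bar> * \<bar>a m\<bar>) has_sum \<bar>a n\<bar> * S) UNIV" for n
      using has_sum_cmult_right[OF aS, of "\<bar>a n\<bar>"] by simp
    show "(\<lambda>n. \<bar>a n\<bar> * S) summable_on UNIV"
      using has_sum_cmult_left[OF aS, of S] summable_on_def by blast
  qed auto
  then have "(\<lambda>(n,m). \<bar>a n\<bar> * \<bar>a m\<bar> * C) summable_on (UNIV \<times> UNIV)"
    using summable_on_cmult_left[of _ _ C] by (simp add: case_prod_unfold)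
  then have dominant: "(\<lambda>p. norm (case p of (n,m) \<Rightarrow> \<bar>a n\<bar> * \<bar>a m\<bar> * C)) summable_on (UNIV \<times> UNIV)"
    by (rule summable_on_cong[THEN iffD1, rotated]) (use \<open>0 \<le> C\<close> in \<open>auto simp: abs_mult\<close>)
  show ?thesis
  proof (rule abs_summable_summable, rule Infinite_Sum.abs_summable_on_comparison_test[OF dominant])
    fix p :: "nat \<times> nat"
    obtain n m where p: "p = (n, m)" by fastforce
    have "\<bar>a n\<bar> * \<bar>a m\<bar> * norm (v (n + m)) \<le> \<bar>a n\<bar> * \<bar>a m\<bar> * C"
      by (rule mult_left_mono[OF v]) simp
    then show "norm (case p of (n, m) \<Rightarrow> (a n * a m) *\<^sub>R v (n + m))
        \<le> norm (case p of (n, m) \<Rightarrow> \<bar>a n\<bar> * \<bar>a m\<bar> * C)"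
      unfolding p using \<open>0 \<le> C\<close> by (simp add: abs_mult)
  qed
qed

lemma suminf_product_shift:
  fixes a :: "nat \<Rightarrow> real" and v :: "nat \<Rightarrow> 'a::banach"
  assumes a: "summable (\<lambda>n. \<bar>a n\<bar>)" and v: "\<And>n. norm (v n) \<le> C"
  shows "(\<Sum>n. a n *\<^sub>R (\<Sum>m. a m *\<^sub>R v (n + m)))
       = infsum (\<lambda>N. (\<Sum>k\<le>N. a k * a (N - k)) *\<^sub>R v N) UNIV"
proof -
  define g where "g = (\<lambda>(n, m). (a n * a m) *\<^sub>R v (n + m))"
  have g: "g summable_on UNIV \<times> UNIV" unfolding g_def by (rule summable_on_product_shift[OF a v])
  have aC: "summable (\<lambda>m. \<bar>a m\<bar> * C)" using summable_mult2[OF a] by simp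
  have inner_summable: "summable (\<lambda>m. norm (a m *\<^sub>R v (n + m)))" for n
    by (rule summable_comparison_test'[OF aC, where N=0]) (simp add: mult_left_mono[OF v])
  have inner_le: "norm (\<Sum>m. a m *\<^sub>R v (n + m)) \<le> (\<Sum>m. \<bar>a m\<bar> * C)" for n
    by (rule norm_suminf_le) (simp_all add: aC mult_left_mono[OF v])
  have "summable (\<lambda>n. norm (a n *\<^sub>R (\<Sum>m. a m *\<^sub>R v (n + m))))"
    by (rule summable_comparison_test'[where g="\<lambda>n. \<bar>a n\<bar> * (\<Sum>m. \<bar>a m\<bar> * C)" and N=0])
      (use summable_mult2[OF a] inner_le in \<open>auto intro: mult_left_mono\<close>)
  then have "(\<Sum>n. a n *\<^sub>R (\<Sum>m. a m *\<^sub>R v (n + m)))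
      = infsum (\<lambda>n. a n *\<^sub>R (\<Sum>m. a m *\<^sub>R v (n + m))) UNIV"
    by (rule suminf_eq_infsum)
  also have "\<dots> = infsum (\<lambda>n. infsum (\<lambda>m. g (n, m)) UNIV) UNIV"
    unfolding suminf_eq_infsum[OF inner_summable] g_def
    by (simp add: infsum_scaleR_right[symmetric] scaleR_scaleR)
  also have "\<dots> = infsum g (UNIV \<times> UNIV)"
    by (rule infsum_Sigma_banach[OF g])
  also have "\<dots> = infsum (\<lambda>p. g ((\<lambda>(N, k). (k, N - k)) p)) (SIGMA N:UNIV. {..N})"
    by (rule infsum_reindex_bij_betw[OF bij_betw_antidiagonal, symmetric])
  also have "\<dots> = infsum (\<lambda>N. infsum (\<lambda>k. g ((\<lambda>(N, k). (k, N - k)) (N, k))) {..N}) UNIV"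
  proof (rule infsum_Sigma_banach[symmetric])
    show "(\<lambda>p. g ((\<lambda>(N, k). (k, N - k)) p)) summable_on (SIGMA N:UNIV. {..N})"
      using summable_on_reindex_bij_betw[OF bij_betw_antidiagonal, of g] g by blast
  qed
  also have "\<dots> = infsum (\<lambda>N. (\<Sum>k\<le>N. a k * a (N - k)) *\<^sub>R v N) UNIV"
    by (intro infsum_cong) (simp add: g_def scaleR_sum_left)
  finally show ?thesis .
qed

text \<open>Normalise \<open>P\<close> to the positive contraction \<open>Q = I - P/s\<close> and evaluate the binomial series of
  \<open>sqrt (1 - t)\<close> at \<open>Q\<close>: this gives \<open>R = sqrt (P/s)\<close>, and \<open>S = sqrt s R\<close> is the square root of \<open>P\<close>.\<close>

locale sqrt_construction =
  fixes P :: "'a::chilbert \<Rightarrow> 'a"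
  assumes P_positive: "op_positive P"
begin

definition s :: real where "s = onorm P + 1"
definition Q :: "'a \<Rightarrow> 'a" where "Q = (\<lambda>x. x - (1 / s) *\<^sub>R P x)"
definition R :: "'a \<Rightarrow> 'a" where "R = (\<lambda>x. \<Sum>n. sqrt_coeff n *\<^sub>R (Q ^^ n) x)"
definition S :: "'a \<Rightarrow> 'a" where "S = (\<lambda>x. sqrt s *\<^sub>R R x)"

lemma P_bounded: "bounded_op P"
  using op_positive_bounded[OF P_positive] .

lemma s_pos: "0 < s"
  unfolding s_def using bounded_op_onorm_nonneg[OF P_bounded] by simp

lemma Q_bounded: "bounded_op Q"
proof -
  have "Q = id - op_scale (complex_of_real (1 / s)) P"
    unfolding Q_def by (simp add: fun_eq_iff scaleC_of_real[symmetric])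
  then show ?thesis by (simp add: bounded_op_minus bounded_op_id bounded_op_scale P_bounded)
qed

lemma cinner_Q_commute: "cinner (Q x) y = cinner x (Q y)"
  unfolding Q_def
  by (simp add: cinner_diff_left cinner_diff_right cinner_scaleR_left cinner_scaleR_right
      op_positive_cinner_commute[OF P_positive])

lemma cinner_Q: "cinner x (Q x) = cinner x x - complex_of_real (1 / s) * cinner x (P x)"
  unfolding Q_def by (simp add: cinner_diff_right cinner_scaleR_right)

lemma Q_positive: "op_positive Q"
proof (rule op_positiveI[OF Q_bounded])
  fix x
  show "Im (cinner x (Q x)) = 0"
    unfolding cinner_Q using op_positive_Im[OF P_positive] by simp
  have "Re (cinner x (P x)) \<le> onorm P * (norm x)\<^sup>2" by (rule Re_cinner_le_onorm[OF P_bounded])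
  also have "\<dots> \<le> s * (norm x)\<^sup>2" unfolding s_def by (intro mult_right_mono) auto
  finally show "0 \<le> Re (cinner x (Q x))"
    unfolding cinner_Q using s_pos by (simp add: field_simps)
qed

lemma Re_cinner_Q_le: "Re (cinner x (Q x)) \<le> (norm x)\<^sup>2"
  unfolding cinner_Q using op_positive_Re[OF P_positive, of x] s_pos by simp

lemma norm_Q_le: "norm (Q x) \<le> norm x"
proof -
  have "((norm (Q x))\<^sup>2)\<^sup>2 = (cmod (cinner (Q x) (Q x)))\<^sup>2"
    by (simp add: cinner_self_norm norm_power)
  also have "\<dots> \<le> Re (cinner (Q x) (Q (Q x))) * Re (cinner x (Q x))"
    by (rule op_positive_cauchy_schwarz(1)[OF Q_positive])
  also have "\<dots> \<le> (norm (Q x))\<^sup>2 * (norm x)\<^sup>2"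
    by (intro mult_mono Re_cinner_Q_le) (use op_positive_Re[OF Q_positive] in auto)
  finally have "(norm (Q x))\<^sup>2 \<le> (norm x)\<^sup>2"
    by (cases "Q x = 0") (auto simp: power2_eq_square)
  then show ?thesis by (simp add: power2_le_iff_abs_le)
qed

lemma Q_funpow_bounded: "bounded_op (Q ^^ n)"
  by (rule bounded_op_funpow[OF Q_bounded])

lemma norm_Q_funpow_le: "norm ((Q ^^ n) x) \<le> norm x"
  by (induction n) (auto intro: order.trans[OF norm_Q_le])

lemma cinner_Q_funpow_commute: "cinner ((Q ^^ n) x) y = cinner x ((Q ^^ n) y)"
proof (induction n arbitrary: x y)
  case (Suc n)
  have "cinner ((Q ^^ Suc n) x) y = cinner ((Q ^^ n) x) (Q y)" by (simp add: cinner_Q_commute)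
  also have "\<dots> = cinner x ((Q ^^ Suc n) y)" by (simp add: Suc funpow_swap1)
  finally show ?case .
qed simp

lemma summable_norm_R_terms: "summable (\<lambda>n. norm (sqrt_coeff n *\<^sub>R (Q ^^ n) x))"
  by (rule summable_comparison_test'[where g="\<lambda>n. \<bar>sqrt_coeff n\<bar> * norm x" and N=0])
    (use summable_mult2[OF summable_abs_sqrt_coeff] norm_Q_funpow_le
      in \<open>auto intro: mult_left_mono\<close>)

lemma summable_R_terms: "summable (\<lambda>n. sqrt_coeff n *\<^sub>R (Q ^^ n) x)"
  using summable_norm_cancel[OF summable_norm_R_terms] .

lemma R_bounded: "bounded_op R"
proof (rule bounded_opI[where K="\<Sum>n. \<bar>sqrt_coeff n\<bar>"])
  show "R (x + y) = R x + R y" for x y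
    unfolding R_def using bounded_opD(1)[OF Q_funpow_bounded]
    by (simp add: scaleR_add_right suminf_add[OF summable_R_terms summable_R_terms, symmetric])
  show "R (scaleC c x) = scaleC c (R x)" for c x
    unfolding R_def
    using bounded_linear.suminf[OF bounded_linear_scaleC summable_R_terms]
      bounded_opD(2)[OF Q_funpow_bounded]
    by (simp add: scaleC_scaleR_commute)
  show "norm (R x) \<le> (\<Sum>n. \<bar>sqrt_coeff n\<bar>) * norm x" for x
  proof -
    have "norm (R x) \<le> (\<Sum>n. \<bar>sqrt_coeff n\<bar> * norm x)" unfolding R_def
      by (rule norm_suminf_le)
        (use summable_mult2[OF summable_abs_sqrt_coeff] norm_Q_funpow_le
          in \<open>auto intro: mult_left_mono\<close>)
    then show ?thesis using suminf_mult2[OF summable_abs_sqrt_coeff] by simp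
  qed
qed

lemma R_R: "R (R x) = x - Q x"
proof -
  have "R (R x) = (\<Sum>n. sqrt_coeff n *\<^sub>R (\<Sum>m. sqrt_coeff m *\<^sub>R (Q ^^ (n + m)) x))"
    by (simp add: R_def bounded_op_suminf[OF Q_funpow_bounded summable_R_terms]
        bounded_op_scaleR[OF Q_funpow_bounded] funpow_add)
  also have "\<dots> = infsum (\<lambda>N. (\<Sum>k\<le>N. sqrt_coeff k * sqrt_coeff (N - k)) *\<^sub>R (Q ^^ N) x) UNIV"
    by (rule suminf_product_shift[OF summable_abs_sqrt_coeff norm_Q_funpow_le])
  also have "\<dots> = infsum (\<lambda>N. (if N = 0 then 1 else if N = 1 then -1 else 0) *\<^sub>R (Q ^^ N) x) {0, 1}"
    by (rule infsum_cong_neutral) (auto simp: sqrt_coeff_convolution)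
  also have "\<dots> = x - Q x" by simp
  finally show ?thesis .
qed

lemma R_positive: "op_positive R"
proof (rule op_positiveI[OF R_bounded])
  fix x
  define q where "q n = cinner x ((Q ^^ n) x)" for n
  have "q n = cnj (q n)" for n
    unfolding q_def by (metis cinner_Q_funpow_commute cinner_conj)
  then have q_real: "q n = complex_of_real (Re (q n))" for n
    by (metis Reals_cnj_iff of_real_Re)
  have Re_q_le: "Re (q n) \<le> (norm x)\<^sup>2" for n
  proof -
    have "Re (q n) \<le> norm x * norm ((Q ^^ n) x)"
      unfolding q_def by (rule order_trans[OF complex_Re_le_cmod norm_cinner_le])
    also have "\<dots> \<le> norm x * norm x" by (rule mult_left_mono[OF norm_Q_funpow_le]) simp
    finally show ?thesis by (simp add: power2_eq_square)
  qed
  have q_term: "cinner x (sqrt_coeff n *\<^sub>R (Q ^^ n) x) = complex_of_real (sqrt_coeff n * Re (q n))" for n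
    using q_real[of n] by (simp add: q_def cinner_scaleR_right del: of_real_mult) (simp add: q_def)
  have "(\<lambda>n. cinner x (sqrt_coeff n *\<^sub>R (Q ^^ n) x)) sums cinner x (R x)"
    unfolding R_def by (rule bounded_linear.sums[OF bounded_linear_cinner_right summable_sums[OF summable_R_terms]])
  then have sums: "(\<lambda>n. complex_of_real (sqrt_coeff n * Re (q n))) sums cinner x (R x)"
    by (simp only: q_term)
  have real_sums: "(\<lambda>n. sqrt_coeff n * Re (q n)) sums Re (cinner x (R x))"
    using sums_Re[OF sums] by simp
  show "Im (cinner x (R x)) = 0"
    using sums_unique2[OF sums_Im[OF sums] sums_0] by simp
  \<comment> \<open>\<open>sqrt_coeff n \<le> 0\<close> for \<open>n \<ge> 1\<close> and \<open>q 0 = \<parallel>x\<parallel>\<^sup>2\<close>, so bounding every \<open>q n\<close> by \<open>\<parallel>x\<parallel>\<^sup>2\<close> lowers the sum\<close>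
  have "(\<Sum>n. sqrt_coeff n * (norm x)\<^sup>2) \<le> (\<Sum>n. sqrt_coeff n * Re (q n))"
  proof (rule suminf_le)
    show "sqrt_coeff n * (norm x)\<^sup>2 \<le> sqrt_coeff n * Re (q n)" for n
    proof (cases "n = 0")
      case False
      then show ?thesis using sqrt_coeff_nonpos[of n] Re_q_le[of n] by (simp add: mult_left_mono_neg)
    qed (simp add: q_def cinner_self_norm)
  qed (use summable_mult2[OF summable_sqrt_coeff] real_sums sums_summable in auto)
  moreover have "(\<Sum>n. sqrt_coeff n * (norm x)\<^sup>2) = suminf sqrt_coeff * (norm x)\<^sup>2"
    by (rule suminf_mult2[OF summable_sqrt_coeff, symmetric])
  moreover have "0 \<le> suminf sqrt_coeff * (norm x)\<^sup>2"
    using suminf_sqrt_coeff_nonneg by simp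
  ultimately show "0 \<le> Re (cinner x (R x))"
    using sums_unique[OF real_sums] by linarith
qed

lemma R_commute:
  assumes B: "bounded_op B" and BP: "B \<circ> P = P \<circ> B"
  shows "B \<circ> R = R \<circ> B"
proof (rule ext)
  fix x
  have "B (Q x) = Q (B x)" for x
    unfolding Q_def using BP bounded_op_diff[OF B] bounded_op_scaleR[OF B] by (metis comp_apply)
  then have BQ: "B ((Q ^^ n) x) = (Q ^^ n) (B x)" for n x
    by (induction n) simp_all
  have "B (R x) = (\<Sum>n. B (sqrt_coeff n *\<^sub>R (Q ^^ n) x))"
    unfolding R_def by (rule bounded_op_suminf[OF B summable_R_terms])
  then show "(B \<circ> R) x = (R \<circ> B) x"
    unfolding R_def by (simp add: bounded_op_scaleR[OF B] BQ)
qed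

lemma S_positive: "op_positive S"
proof (rule op_positiveI)
  have "S = op_scale (complex_of_real (sqrt s)) R"
    unfolding S_def by (rule ext) (simp add: scaleC_of_real)
  then show "bounded_op S" by (simp add: bounded_op_scale[OF R_bounded])
  show "Im (cinner x (S x)) = 0" "0 \<le> Re (cinner x (S x))" for x
    unfolding S_def using op_positive_Im[OF R_positive] op_positive_Re[OF R_positive] s_pos
    by (simp_all add: cinner_scaleR_right)
qed

lemma S_comp_S: "S \<circ> S = P"
proof (rule ext)
  fix x
  have "(S \<circ> S) x = (sqrt s * sqrt s) *\<^sub>R R (R x)"
    unfolding S_def by (simp add: bounded_op_scaleR[OF R_bounded])
  also have "\<dots> = P x" unfolding R_R Q_def using s_pos by simp
  finally show "(S \<circ> S) x = P x" .
qed

lemma S_commute: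
  assumes "bounded_op B" "B \<circ> P = P \<circ> B"
  shows "B \<circ> S = S \<circ> B"
proof (rule ext)
  fix x
  have "B (R x) = R (B x)" using R_commute[OF assms] by (metis comp_apply)
  then show "(B \<circ> S) x = (S \<circ> B) x"
    unfolding S_def by (simp add: bounded_op_scaleR[OF assms(1)])
qed

end

lemma op_positive_sqrt_exists:
  fixes P :: "'a::chilbert \<Rightarrow> 'a"
  assumes "op_positive P"
  shows "\<exists>S. op_positive S \<and> S \<circ> S = P \<and> (\<forall>B. bounded_op B \<and> B \<circ> P = P \<circ> B \<longrightarrow> B \<circ> S = S \<circ> B)"
proof -
  interpret sqrt_construction P by (rule sqrt_construction.intro[OF assms])
  show ?thesis using S_positive S_comp_S S_commute by blast
qed

text \<open>Uniqueness only needs the commuting square root \<open>S\<close>: then \<open>Y\<close> commutes with \<open>S\<close>, and for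
  \<open>y = Y x - S x\<close> one gets \<open>Y y + S y = (Y\<^sup>2 - S\<^sup>2) x = 0\<close>, whence \<open>Y y = S y = 0\<close>.\<close>

lemma op_positive_sqrt_unique:
  fixes P :: "'a::chilbert \<Rightarrow> 'a"
  assumes Y: "op_positive Y" "Y \<circ> Y = P"
    and S: "op_positive S" "S \<circ> S = P" "\<forall>B. bounded_op B \<and> B \<circ> P = P \<circ> B \<longrightarrow> B \<circ> S = S \<circ> B"
  shows "Y = S"
proof (rule ext)
  fix x
  have Yb: "bounded_op Y" and Sb: "bounded_op S" using Y(1) S(1) by (auto intro: op_positive_bounded)
  have "Y \<circ> P = P \<circ> Y" using Y(2) by (auto simp: comp_assoc)
  then have YS: "Y (S z) = S (Y z)" for z using S(3) Yb by (metis comp_apply)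
  have YY: "Y (Y z) = P z" and SS: "S (S z) = P z" for z
    using Y(2) S(2) by (metis comp_apply)+
  define y where "y = Y x - S x"
  have "Y y + S y = 0"
    unfolding y_def bounded_op_diff[OF Yb] bounded_op_diff[OF Sb] using YY SS YS by simp
  then have "Re (cinner y (Y y)) + Re (cinner y (S y)) = 0"
    by (metis cinner_add_right cinner_zero_right plus_complex.sel(1) zero_complex.sel(1))
  then have "Re (cinner y (Y y)) = 0" "Re (cinner y (S y)) = 0"
    using op_positive_Re[OF Y(1), of y] op_positive_Re[OF S(1), of y] by linarith+
  then have "Y y = 0" "S y = 0" using op_positive_form_eq_0 Y(1) S(1) by blast+
  then have "cinner (Y x - S x) y = 0"
    by (simp add: cinner_diff_left op_positive_cinner_commute[OF Y(1)]
        op_positive_cinner_commute[OF S(1)])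
  then show "Y x = S x" unfolding y_def by (simp add: cinner_self_eq_0_iff)
qed

lemma op_positive_adjoint_comp:
  fixes X :: "'a::chilbert \<Rightarrow> 'a"
  assumes "bounded_op X"
  shows "op_positive (op_adjoint X \<circ> X)"
  using op_positive_sandwich[OF op_positive_id assms] by simp

lemma op_abs:
  fixes X :: "'a::chilbert \<Rightarrow> 'a"
  assumes X: "bounded_op X"
  shows "op_positive (op_abs X)" and "op_abs X \<circ> op_abs X = op_adjoint X \<circ> X"
proof -
  obtain S where S: "op_positive S" "S \<circ> S = op_adjoint X \<circ> X"
    "\<forall>B. bounded_op B \<and> B \<circ> (op_adjoint X \<circ> X) = (op_adjoint X \<circ> X) \<circ> B \<longrightarrow> B \<circ> S = S \<circ> B"
    using op_positive_sqrt_exists[OF op_positive_adjoint_comp[OF X]] by blast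
  have "op_abs X = S" unfolding op_abs_def
    by (rule the_equality) (use S op_positive_sqrt_unique[OF _ _ S] in blast)+
  then show "op_positive (op_abs X)" and "op_abs X \<circ> op_abs X = op_adjoint X \<circ> X"
    using S by simp_all
qed

lemma tr_pnorm_even:
  fixes X :: "'a::chilbert \<Rightarrow> 'a"
  assumes "bounded_op X"
  shows "tr_pnorm \<tau> (2 * k) X = Re (\<tau> ((op_adjoint X \<circ> X) ^^ k)) powr (1 / real (2 * k))"
  unfolding tr_pnorm_def funpow_mult[symmetric] using op_abs(2)[OF assms]
  by (simp add: numeral_2_eq_2)

lemma funpow_comp_Suc: "(f \<circ> g) ^^ Suc k = f \<circ> (g \<circ> f) ^^ k \<circ> g"
proof (induction k)
  case (Suc k)
  have "(f \<circ> g) ^^ Suc (Suc k) = (f \<circ> g) \<circ> (f \<circ> g) ^^ Suc k"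
    by (rule funpow.simps(2))
  also have "\<dots> = (f \<circ> g) \<circ> (f \<circ> (g \<circ> f) ^^ k \<circ> g)"
    by (simp only: Suc.IH)
  also have "\<dots> = f \<circ> (g \<circ> f) ^^ Suc k \<circ> g"
    by (simp only: funpow.simps(2) comp_assoc)
  finally show ?case .
qed simp

section \<open>Traces on von Neumann algebras\<close>

locale tracial_algebra =
  fixes M :: "('a::chilbert \<Rightarrow> 'a) set" and \<tau> :: "('a \<Rightarrow> 'a) \<Rightarrow> complex"
  assumes von_neumann: "von_neumann_algebra M" and trace: "finite_trace M \<tau>"
begin

lemma M_bounded: "X \<in> M \<Longrightarrow> bounded_op X"
  and id_in_M: "id \<in> M"
  and add_in_M: "X \<in> M \<Longrightarrow> Y \<in> M \<Longrightarrow> X + Y \<in> M"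
  and comp_in_M: "X \<in> M \<Longrightarrow> Y \<in> M \<Longrightarrow> X \<circ> Y \<in> M"
  and op_scale_in_M: "X \<in> M \<Longrightarrow> op_scale c X \<in> M"
  and op_adjoint_in_M: "X \<in> M \<Longrightarrow> op_adjoint X \<in> M"
  and bicommutant: "commutant (commutant M) = M"
  using von_neumann unfolding von_neumann_algebra_def by blast+

lemma diff_in_M: "X \<in> M \<Longrightarrow> Y \<in> M \<Longrightarrow> X - Y \<in> M"
  unfolding diff_eq_add_op_scale by (intro add_in_M op_scale_in_M)

lemma funpow_in_M: "X \<in> M \<Longrightarrow> X ^^ n \<in> M"
  by (induction n) (simp_all add: id_in_M comp_in_M)

lemmas M_closed = id_in_M add_in_M comp_in_M op_scale_in_M op_adjoint_in_M diff_in_M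

lemma tau_add: "X \<in> M \<Longrightarrow> Y \<in> M \<Longrightarrow> \<tau> (X + Y) = \<tau> X + \<tau> Y"
  and tau_op_scale: "X \<in> M \<Longrightarrow> \<tau> (op_scale c X) = c * \<tau> X"
  and tau_commute: "X \<in> M \<Longrightarrow> Y \<in> M \<Longrightarrow> \<tau> (X \<circ> Y) = \<tau> (Y \<circ> X)"
  using trace unfolding finite_trace_def by blast+

lemma tau_positive: "X \<in> M \<Longrightarrow> op_positive X \<Longrightarrow> Im (\<tau> X) = 0 \<and> 0 \<le> Re (\<tau> X)"
  using trace unfolding finite_trace_def by (auto simp: complex_is_Real_iff)

lemma tau_diff: "X \<in> M \<Longrightarrow> Y \<in> M \<Longrightarrow> \<tau> (X - Y) = \<tau> X - \<tau> Y"
  unfolding diff_eq_add_op_scale by (simp add: tau_add tau_op_scale op_scale_in_M)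

text \<open>The commutant of \<open>M\<close> commutes with \<open>P\<close>, hence with its square root, which therefore
  lies in the bicommutant \<open>M\<close>.\<close>

lemma sqrt_in_M:
  assumes "P \<in> M" "op_positive P"
  shows "\<exists>R\<in>M. op_positive R \<and> R \<circ> R = P"
proof -
  obtain S where S: "op_positive S" "S \<circ> S = P"
    "\<forall>B. bounded_op B \<and> B \<circ> P = P \<circ> B \<longrightarrow> B \<circ> S = S \<circ> B"
    using op_positive_sqrt_exists[OF assms(2)] by blast
  have "S \<in> commutant (commutant M)"
    using S(3) op_positive_bounded[OF S(1)] assms(1) unfolding commutant_def by auto
  then show ?thesis using S bicommutant by blast
qed

lemma tau_form_nonneg:
  assumes "K \<in> M" "op_positive K" and "X \<in> M"
  shows "Im (\<tau> (K \<circ> X \<circ> op_adjoint X)) = 0 \<and> 0 \<le> Re (\<tau> (K \<circ> X \<circ> op_adjoint X))"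
proof -
  have "\<tau> (K \<circ> X \<circ> op_adjoint X) = \<tau> (op_adjoint X \<circ> K \<circ> X)"
    using tau_commute[of "K \<circ> X" "op_adjoint X"] assms by (simp add: comp_assoc M_closed)
  then show ?thesis
    using tau_positive op_positive_sandwich[OF assms(2) M_bounded] assms by (simp add: M_closed)
qed

lemma Re_tau_adjoint_comp_nonneg: "X \<in> M \<Longrightarrow> 0 \<le> Re (\<tau> (op_adjoint X \<circ> X))"
  using tau_form_nonneg[OF id_in_M op_positive_id op_adjoint_in_M]
  by (simp add: op_adjoint_adjoint M_bounded)

lemma tau_form_expand:
  assumes K: "K \<in> M" and X: "X \<in> M" and Y: "Y \<in> M"
  shows "\<tau> (K \<circ> (X + op_scale c Y) \<circ> op_adjoint (X + op_scale c Y))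
    = \<tau> (K \<circ> X \<circ> op_adjoint X)
      + (c * \<tau> (K \<circ> Y \<circ> op_adjoint X) + cnj c * \<tau> (K \<circ> X \<circ> op_adjoint Y))
      + cnj c * c * \<tau> (K \<circ> Y \<circ> op_adjoint Y)"
proof -
  have Kb: "bounded_op K" and Xb: "bounded_op X" and Yb: "bounded_op Y"
    using M_bounded K X Y by auto
  have "op_adjoint (X + op_scale c Y) = op_adjoint X + op_scale (cnj c) (op_adjoint Y)"
    using op_adjoint_add[OF Xb bounded_op_scale[OF Yb]] op_adjoint_scale[OF Yb] by simp
  then have "K \<circ> (X + op_scale c Y) \<circ> op_adjoint (X + op_scale c Y)
     = (K \<circ> X \<circ> op_adjoint X)
       + (op_scale c (K \<circ> Y \<circ> op_adjoint X) + op_scale (cnj c) (K \<circ> X \<circ> op_adjoint Y))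
       + op_scale (cnj c * c) (K \<circ> Y \<circ> op_adjoint Y)"
    by (simp add: fun_eq_iff bounded_opD[OF Kb] bounded_opD[OF Xb] bounded_opD[OF Yb]
        scaleC_add_right scaleC_scaleC add_ac mult.commute)
  then show ?thesis
    by (simp add: tau_add tau_op_scale K X Y M_closed)
qed

lemma tau_form_cauchy_schwarz:
  assumes K: "K \<in> M" "op_positive K" and X: "X \<in> M" and Y: "Y \<in> M"
  shows "(cmod (\<tau> (K \<circ> Y \<circ> op_adjoint X)))\<^sup>2
    \<le> Re (\<tau> (K \<circ> X \<circ> op_adjoint X)) * Re (\<tau> (K \<circ> Y \<circ> op_adjoint Y))"
proof (rule hermitian_quadratic_nonneg(1))
  fix c
  have "Im (\<tau> (K \<circ> (X + op_scale c Y) \<circ> op_adjoint (X + op_scale c Y))) = 0 \<and>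
      0 \<le> Re (\<tau> (K \<circ> (X + op_scale c Y) \<circ> op_adjoint (X + op_scale c Y)))"
    by (rule tau_form_nonneg[OF K]) (simp add: X Y M_closed)
  then show "Im (c * \<tau> (K \<circ> Y \<circ> op_adjoint X) + cnj c * \<tau> (K \<circ> X \<circ> op_adjoint Y)) = 0"
    and "0 \<le> Re (\<tau> (K \<circ> X \<circ> op_adjoint X))
      + Re (c * \<tau> (K \<circ> Y \<circ> op_adjoint X) + cnj c * \<tau> (K \<circ> X \<circ> op_adjoint Y))
      + (cmod c)\<^sup>2 * Re (\<tau> (K \<circ> Y \<circ> op_adjoint Y))"
    using tau_form_nonneg[OF K X] tau_form_nonneg[OF K Y]
    unfolding tau_form_expand[OF K(1) X Y] by (simp_all add: cnj_mult_cmod)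
qed (use tau_form_nonneg[OF K X] tau_form_nonneg[OF K Y] in auto)

lemma Re_tau_sandwich_le:
  assumes X: "X \<in> M" and K: "K \<in> M"
    and le: "op_positive (op_scale (complex_of_real c) id - K)"
  shows "Re (\<tau> (op_adjoint X \<circ> K \<circ> X)) \<le> c * Re (\<tau> (op_adjoint X \<circ> X))"
proof -
  have Xb: "bounded_op X" using M_bounded[OF X] .
  have "op_adjoint X \<circ> (op_scale (complex_of_real c) id - K) \<circ> X
      = op_scale (complex_of_real c) (op_adjoint X \<circ> X) - (op_adjoint X \<circ> K \<circ> X)"
    by (simp add: fun_eq_iff bounded_op_diff[OF bounded_op_adjoint[OF Xb]]
        bounded_opD(2)[OF bounded_op_adjoint[OF Xb]])
  moreover have "op_adjoint X \<circ> (op_scale (complex_of_real c) id - K) \<circ> X \<in> M"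
    by (simp add: X K M_closed)
  ultimately have "0 \<le> Re (\<tau> (op_scale (complex_of_real c) (op_adjoint X \<circ> X) - (op_adjoint X \<circ> K \<circ> X)))"
    using tau_positive op_positive_sandwich[OF le Xb] by metis
  then show ?thesis by (simp add: tau_diff tau_op_scale X K M_closed)
qed

lemma tr_pnorm_two: "X \<in> M \<Longrightarrow> tr_pnorm \<tau> 2 X = sqrt (Re (\<tau> (op_adjoint X \<circ> X)))"
  using tr_pnorm_even[OF M_bounded, of X \<tau> 1] Re_tau_adjoint_comp_nonneg[of X]
  by (simp add: powr_half_sqrt)

lemma tr_pnorm_four:
  "X \<in> M \<Longrightarrow> tr_pnorm \<tau> 4 X = Re (\<tau> ((op_adjoint X \<circ> X) \<circ> (op_adjoint X \<circ> X))) powr (1/4)"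
proof -
  assume "X \<in> M"
  then have "tr_pnorm \<tau> (2 * 2) X = Re (\<tau> ((op_adjoint X \<circ> X) ^^ 2)) powr (1 / real (2 * 2))"
    by (rule tr_pnorm_even[OF M_bounded])
  moreover have "(f :: 'a \<Rightarrow> 'a) ^^ 2 = f \<circ> f" for f by (simp add: numeral_2_eq_2)
  ultimately show ?thesis by simp
qed

lemma tr_pnorm_even_op_adjoint:
  assumes X: "X \<in> M"
  shows "tr_pnorm \<tau> (2 * k) (op_adjoint X) = tr_pnorm \<tau> (2 * k) X"
proof (cases k)
  case (Suc j)
  have Xb: "bounded_op X" using M_bounded[OF X] .
  have "\<tau> ((X \<circ> op_adjoint X) ^^ Suc j) = \<tau> (X \<circ> ((op_adjoint X \<circ> X) ^^ j \<circ> op_adjoint X))"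
    by (simp only: funpow_comp_Suc comp_assoc)
  also have "\<dots> = \<tau> ((op_adjoint X \<circ> X) ^^ Suc j)"
    using tau_commute[of X "(op_adjoint X \<circ> X) ^^ j \<circ> op_adjoint X"] X
    by (simp add: comp_assoc funpow_Suc_right funpow_in_M M_closed del: funpow.simps)
  finally show ?thesis
    unfolding tr_pnorm_even[OF Xb] tr_pnorm_even[OF bounded_op_adjoint[OF Xb]]
      op_adjoint_adjoint[OF Xb] Suc by simp
qed (simp add: tr_pnorm_def)

end

section \<open>States with a density\<close>

lemma sqrt_sqrt_eq_powr: "0 \<le> (w::real) \<Longrightarrow> sqrt (sqrt w) = w powr (1/4)"
  by (simp add: sqrt_def root_powr_inverse powr_powr)

lemma le_mult_of_le_mult_sqrt:
  fixes u x y a b c :: real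
  assumes "u \<le> x * y" "0 \<le> x" "0 \<le> y" "x \<le> a * sqrt c" "y \<le> b * sqrt c" "0 \<le> c"
  shows "u \<le> a * b * c"
proof -
  have "x * y \<le> (a * sqrt c) * (b * sqrt c)"
    using assms by (intro mult_mono) auto
  also have "\<dots> = a * b * c" using \<open>0 \<le> c\<close> by (simp add: algebra_simps)
  finally show ?thesis using assms(1) by linarith
qed

text \<open>\<open>T\<close> is the density of the state \<open>\<lambda>X. \<tau> (T \<circ> X)\<close>, and \<open>state_norm\<close> is its GNS seminorm.\<close>

locale trace_density = tracial_algebra +
  fixes T :: "'a::chilbert \<Rightarrow> 'a"
  assumes T_in_M: "T \<in> M" and T_positive: "op_positive T" and tau_T: "\<tau> T = 1"
begin

definition state_norm :: "('a \<Rightarrow> 'a) \<Rightarrow> real" where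
  "state_norm Z = sqrt (Re (\<tau> (T \<circ> op_adjoint Z \<circ> Z)))"

lemma T_bounded: "bounded_op T"
  using op_positive_bounded[OF T_positive] .

lemma state_norm_nonneg: "Z \<in> M \<Longrightarrow> 0 \<le> state_norm Z"
  using tau_form_nonneg[OF T_in_M T_positive op_adjoint_in_M, of Z]
  by (simp add: state_norm_def op_adjoint_adjoint M_bounded)

lemma state_norm_sq: "Z \<in> M \<Longrightarrow> (state_norm Z)\<^sup>2 = Re (\<tau> (T \<circ> op_adjoint Z \<circ> Z))"
  using tau_form_nonneg[OF T_in_M T_positive op_adjoint_in_M, of Z]
  by (simp add: state_norm_def op_adjoint_adjoint M_bounded)

lemma state_norm_cauchy_schwarz:
  assumes X: "X \<in> M" and Y: "Y \<in> M"
  shows "cmod (\<tau> (T \<circ> Y \<circ> X)) \<le> state_norm (op_adjoint Y) * state_norm X"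
proof -
  have "(cmod (\<tau> (T \<circ> Y \<circ> op_adjoint (op_adjoint X))))\<^sup>2
      \<le> Re (\<tau> (T \<circ> op_adjoint X \<circ> op_adjoint (op_adjoint X))) * Re (\<tau> (T \<circ> Y \<circ> op_adjoint Y))"
    by (rule tau_form_cauchy_schwarz[OF T_in_M T_positive op_adjoint_in_M[OF X] Y])
  then have "(cmod (\<tau> (T \<circ> Y \<circ> X)))\<^sup>2 \<le> (state_norm (op_adjoint Y))\<^sup>2 * (state_norm X)\<^sup>2"
    using state_norm_sq[OF X] state_norm_sq[OF op_adjoint_in_M[OF Y]] X Y
    by (simp add: op_adjoint_adjoint M_bounded mult.commute)
  moreover have "0 \<le> state_norm (op_adjoint Y) * state_norm X"
    using state_norm_nonneg X Y by (simp add: M_closed)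
  ultimately show ?thesis by (simp add: power_mult_distrib[symmetric] power2_le_iff_abs_le)
qed

lemma tau_centred_covariance:
  assumes A: "A \<in> M" and Y: "Y \<in> M"
  shows "\<tau> (T \<circ> (A - op_scale (\<tau> (T \<circ> A)) id) \<circ> (Y - op_scale \<mu> id))
    = \<tau> (T \<circ> A \<circ> Y) - \<tau> (T \<circ> A) * \<tau> (T \<circ> Y)"
proof -
  define l where "l = \<tau> (T \<circ> A)"
  have TA: "(T \<circ> A) - op_scale l T \<in> M" using A T_in_M by (simp add: M_closed)
  have "T \<circ> (A - op_scale l id) \<circ> (Y - op_scale \<mu> id) = ((T \<circ> A) - op_scale l T) \<circ> (Y - op_scale \<mu> id)"
    by (simp add: comp_diff_op_scale_id[OF T_bounded])
  also have "\<dots> = (((T \<circ> A) - op_scale l T) \<circ> Y) - op_scale \<mu> ((T \<circ> A) - op_scale l T)"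
    by (rule comp_diff_op_scale_id[OF M_bounded[OF TA]])
  also have "((T \<circ> A) - op_scale l T) \<circ> Y = (T \<circ> A \<circ> Y) - op_scale l (T \<circ> Y)"
    by (simp add: fun_eq_iff)
  finally have e: "T \<circ> (A - op_scale l id) \<circ> (Y - op_scale \<mu> id)
      = ((T \<circ> A \<circ> Y) - op_scale l (T \<circ> Y)) - op_scale \<mu> ((T \<circ> A) - op_scale l T)" .
  show ?thesis
    unfolding l_def[symmetric] e
    by (simp add: tau_diff tau_op_scale tau_T A Y T_in_M M_closed) (simp add: l_def algebra_simps)
qed

lemma state_norm_centred_le:
  assumes A: "A \<in> M"
  shows "state_norm (op_adjoint (A - op_scale (\<tau> (T \<circ> A)) id))
    \<le> state_norm (op_adjoint (A - op_scale \<alpha> id))"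
proof -
  define C where "C = A - op_scale (\<tau> (T \<circ> A)) id"
  have C: "C \<in> M" and A': "A - op_scale \<alpha> id \<in> M" unfolding C_def by (simp_all add: A M_closed)
  have adjoint_shift: "op_adjoint (A - op_scale \<mu> id) = op_adjoint A - op_scale (cnj \<mu>) id" for \<mu>
    using A by (simp add: op_adjoint_diff op_adjoint_scale op_adjoint_id M_bounded bounded_op_scale
        bounded_op_id)
  have "(state_norm (op_adjoint C))\<^sup>2 = Re (\<tau> (T \<circ> C \<circ> op_adjoint C))"
    using state_norm_sq[OF op_adjoint_in_M[OF C]] C by (simp add: op_adjoint_adjoint M_bounded)
  also have "\<tau> (T \<circ> C \<circ> op_adjoint C) = \<tau> (T \<circ> C \<circ> op_adjoint (A - op_scale \<alpha> id))"
    unfolding C_def adjoint_shift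
    using tau_centred_covariance[OF A op_adjoint_in_M[OF A]] by simp
  also have "Re \<dots> \<le> state_norm (op_adjoint C) * state_norm (op_adjoint (A - op_scale \<alpha> id))"
    by (rule order_trans[OF complex_Re_le_cmod state_norm_cauchy_schwarz[OF op_adjoint_in_M[OF A'] C]])
  finally have "(state_norm (op_adjoint C))\<^sup>2
      \<le> state_norm (op_adjoint C) * state_norm (op_adjoint (A - op_scale \<alpha> id))" .
  then show ?thesis
    unfolding C_def[symmetric]
    using state_norm_nonneg[OF op_adjoint_in_M[OF C]] state_norm_nonneg[OF op_adjoint_in_M[OF A']]
    by (cases "state_norm (op_adjoint C) = 0") (simp_all add: power2_eq_square)
qed

lemma covariance_le_state_norm:
  assumes A: "A \<in> M" and B: "B \<in> M"
  shows "cmod (\<tau> (T \<circ> A \<circ> B) - \<tau> (T \<circ> A) * \<tau> (T \<circ> B))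
    \<le> state_norm (op_adjoint (A - op_scale \<alpha> id)) * state_norm (B - op_scale \<beta> id)"
proof -
  define C where "C = A - op_scale (\<tau> (T \<circ> A)) id"
  have "cmod (\<tau> (T \<circ> A \<circ> B) - \<tau> (T \<circ> A) * \<tau> (T \<circ> B)) = cmod (\<tau> (T \<circ> C \<circ> (B - op_scale \<beta> id)))"
    unfolding C_def tau_centred_covariance[OF A B] ..
  also have "\<dots> \<le> state_norm (op_adjoint C) * state_norm (B - op_scale \<beta> id)"
    by (rule state_norm_cauchy_schwarz) (simp_all add: C_def A B M_closed)
  also have "\<dots> \<le> state_norm (op_adjoint (A - op_scale \<alpha> id)) * state_norm (B - op_scale \<beta> id)"
    unfolding C_def using B by (intro mult_right_mono state_norm_centred_le[OF A] state_norm_nonneg) (simp add: M_closed)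
  finally show ?thesis .
qed

lemma state_norm_le_onorm:
  assumes Z: "Z \<in> M"
  shows "state_norm Z \<le> onorm Z"
proof -
  obtain R where R: "R \<in> M" "op_positive R" "R \<circ> R = T"
    using sqrt_in_M[OF T_in_M T_positive] by blast
  have R_adjoint: "op_adjoint R = R" by (rule op_positive_selfadjoint[OF R(2)])
  have "\<tau> (T \<circ> op_adjoint Z \<circ> Z) = \<tau> (R \<circ> (R \<circ> op_adjoint Z \<circ> Z))"
    by (simp add: R(3)[symmetric] comp_assoc)
  also have "\<dots> = \<tau> (op_adjoint R \<circ> (op_adjoint Z \<circ> Z) \<circ> R)"
    using tau_commute[OF R(1), of "R \<circ> op_adjoint Z \<circ> Z"] R(1) Z
    by (simp add: R_adjoint comp_assoc M_closed)
  finally have "Re (\<tau> (T \<circ> op_adjoint Z \<circ> Z)) \<le> (onorm Z)\<^sup>2 * Re (\<tau> (op_adjoint R \<circ> R))"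
    using Re_tau_sandwich_le[OF R(1) _ op_positive_onorm_sq_minus_adjoint_comp[OF M_bounded[OF Z]]] Z
    by (simp add: M_closed)
  then have "(state_norm Z)\<^sup>2 \<le> (onorm Z)\<^sup>2"
    using state_norm_sq[OF Z] by (simp add: R_adjoint R(3) tau_T)
  then show ?thesis
    using bounded_op_onorm_nonneg[OF M_bounded[OF Z]] by (simp add: power2_le_iff_abs_le)
qed

lemma state_norm_le_tr_pnorm_two:
  assumes Z: "Z \<in> M"
  shows "state_norm Z \<le> tr_pnorm \<tau> 2 Z * sqrt (onorm T)"
proof -
  have Zb: "bounded_op Z" using M_bounded[OF Z] .
  have "\<tau> (T \<circ> op_adjoint Z \<circ> Z) = \<tau> (op_adjoint (op_adjoint Z) \<circ> T \<circ> op_adjoint Z)"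
    using tau_commute[of "T \<circ> op_adjoint Z" Z] Z by (simp add: op_adjoint_adjoint[OF Zb] comp_assoc M_closed T_in_M)
  then have "Re (\<tau> (T \<circ> op_adjoint Z \<circ> Z)) \<le> onorm T * Re (\<tau> (Z \<circ> op_adjoint Z))"
    using Re_tau_sandwich_le[OF op_adjoint_in_M[OF Z] T_in_M op_positive_onorm_minus[OF T_positive]]
    by (simp add: op_adjoint_adjoint[OF Zb])
  also have "\<tau> (Z \<circ> op_adjoint Z) = \<tau> (op_adjoint Z \<circ> Z)"
    using tau_commute Z by (simp add: M_closed)
  finally show ?thesis
    unfolding state_norm_def tr_pnorm_two[OF Z]
    by (metis real_sqrt_le_mono real_sqrt_mult mult.commute)
qed

lemma state_norm_le_tr_pnorm_four:
  assumes Z: "Z \<in> M"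
  shows "state_norm Z \<le> tr_pnorm \<tau> 4 Z * sqrt (tr_pnorm \<tau> 2 T)"
proof -
  define W where "W = op_adjoint Z \<circ> Z"
  have W: "W \<in> M" unfolding W_def by (simp add: Z M_closed)
  have W_adjoint: "op_adjoint W = W"
    unfolding W_def using Z by (simp add: op_adjoint_comp op_adjoint_adjoint bounded_op_adjoint M_bounded)
  have T_adjoint: "op_adjoint T = T" by (rule op_positive_selfadjoint[OF T_positive])
  define t where "t = Re (\<tau> (T \<circ> T))"
  define w where "w = Re (\<tau> (W \<circ> W))"
  have "t \<ge> 0" "w \<ge> 0"
    using Re_tau_adjoint_comp_nonneg[OF T_in_M] Re_tau_adjoint_comp_nonneg[OF W]
    unfolding t_def w_def T_adjoint W_adjoint by auto
  have "\<tau> (T \<circ> op_adjoint Z \<circ> Z) = \<tau> (W \<circ> T)"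
    using tau_commute[OF W T_in_M] unfolding W_def by (simp add: comp_assoc)
  then have "(Re (\<tau> (T \<circ> op_adjoint Z \<circ> Z)))\<^sup>2 \<le> (cmod (\<tau> (W \<circ> T)))\<^sup>2"
    using abs_Re_le_cmod[of "\<tau> (W \<circ> T)"] by (simp add: abs_le_square_iff[symmetric])
  also have "\<dots> \<le> t * w"
    using tau_form_cauchy_schwarz[OF id_in_M op_positive_id T_in_M W]
    unfolding t_def w_def T_adjoint W_adjoint by simp
  finally have "(Re (\<tau> (T \<circ> op_adjoint Z \<circ> Z)))\<^sup>2 \<le> t * w" .
  then have "state_norm Z \<le> sqrt (sqrt w) * sqrt (sqrt t)"
    unfolding state_norm_def using \<open>t \<ge> 0\<close> \<open>w \<ge> 0\<close>
    by (metis mult.commute real_le_rsqrt real_sqrt_le_mono real_sqrt_mult zero_le_mult_iff)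
  then show ?thesis
    using tr_pnorm_four[OF Z] tr_pnorm_two[OF T_in_M] sqrt_sqrt_eq_powr[OF \<open>w \<ge> 0\<close>]
    unfolding t_def w_def W_def T_adjoint by simp
qed

lemma covariance_le:
  assumes A: "A \<in> M" and B: "B \<in> M"
    and N: "\<And>Z. Z \<in> M \<Longrightarrow> state_norm Z \<le> N Z * sqrt c" and "0 \<le> c"
    and N_adjoint: "N (op_adjoint (A - op_scale \<alpha> id)) = N (A - op_scale \<alpha> id)"
  shows "cmod (\<tau> (T \<circ> A \<circ> B) - \<tau> (T \<circ> A) * \<tau> (T \<circ> B))
    \<le> N (A - op_scale \<alpha> id) * N (B - op_scale \<beta> id) * c"
proof (rule le_mult_of_le_mult_sqrt[OF covariance_le_state_norm[OF A B]])
  show "state_norm (op_adjoint (A - op_scale \<alpha> id)) \<le> N (A - op_scale \<alpha> id) * sqrt c"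
    using N[of "op_adjoint (A - op_scale \<alpha> id)"] A by (simp add: N_adjoint M_closed)
  show "state_norm (B - op_scale \<beta> id) \<le> N (B - op_scale \<beta> id) * sqrt c"
    using N B by (simp add: M_closed)
qed (use A B \<open>0 \<le> c\<close> in \<open>simp_all add: state_norm_nonneg M_closed\<close>)

end

theorem theorem3p9:
  fixes M :: "('h::chilbert \<Rightarrow> 'h) set"
    and \<tau> :: "('h \<Rightarrow> 'h) \<Rightarrow> complex"
    and T A B :: "'h \<Rightarrow> 'h"
    and \<alpha> \<beta> :: complex
  assumes "von_neumann_algebra M"
    and "finite_trace M \<tau>" and "normal_functional M \<tau>"
    and "faithful_functional M \<tau>" and "normalized_functional \<tau>"
    and "T \<in> M" and "op_positive T" and "\<tau> T = 1"
    and "A \<in> M" and "B \<in> M"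
  shows "cmod (\<tau> (T \<circ> A \<circ> B) - \<tau> (T \<circ> A) * \<tau> (T \<circ> B))
           \<le> tr_pnorm \<tau> 4 (A - op_scale \<alpha> id) * tr_pnorm \<tau> 4 (B - op_scale \<beta> id) * tr_pnorm \<tau> 2 T
       \<and> cmod (\<tau> (T \<circ> A \<circ> B) - \<tau> (T \<circ> A) * \<tau> (T \<circ> B))
           \<le> tr_pnorm \<tau> 2 (A - op_scale \<alpha> id) * tr_pnorm \<tau> 2 (B - op_scale \<beta> id) * onorm T
       \<and> cmod (\<tau> (T \<circ> A \<circ> B) - \<tau> (T \<circ> A) * \<tau> (T \<circ> B))
           \<le> onorm (A - op_scale \<alpha> id) * onorm (B - op_scale \<beta> id)"
proof -
  interpret trace_density M \<tau> T
    using assms by unfold_locales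
  have A': "A - op_scale \<alpha> id \<in> M" using \<open>A \<in> M\<close> by (simp add: M_closed)
  have "cmod (\<tau> (T \<circ> A \<circ> B) - \<tau> (T \<circ> A) * \<tau> (T \<circ> B))
      \<le> tr_pnorm \<tau> 4 (A - op_scale \<alpha> id) * tr_pnorm \<tau> 4 (B - op_scale \<beta> id) * tr_pnorm \<tau> 2 T"
    using tr_pnorm_even_op_adjoint[OF A', of 2]
    by (intro covariance_le[OF \<open>A \<in> M\<close> \<open>B \<in> M\<close> state_norm_le_tr_pnorm_four]) (simp_all add: tr_pnorm_def)
  moreover have "cmod (\<tau> (T \<circ> A \<circ> B) - \<tau> (T \<circ> A) * \<tau> (T \<circ> B))
      \<le> tr_pnorm \<tau> 2 (A - op_scale \<alpha> id) * tr_pnorm \<tau> 2 (B - op_scale \<beta> id) * onorm T"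
    using tr_pnorm_even_op_adjoint[OF A', of 1] bounded_op_onorm_nonneg[OF T_bounded]
    by (intro covariance_le[OF \<open>A \<in> M\<close> \<open>B \<in> M\<close> state_norm_le_tr_pnorm_two]) simp_all
  moreover have "cmod (\<tau> (T \<circ> A \<circ> B) - \<tau> (T \<circ> A) * \<tau> (T \<circ> B))
      \<le> onorm (A - op_scale \<alpha> id) * onorm (B - op_scale \<beta> id) * 1"
    by (rule covariance_le[OF \<open>A \<in> M\<close> \<open>B \<in> M\<close> _ zero_le_one onorm_op_adjoint[OF M_bounded[OF A']]])
      (simp add: state_norm_le_onorm)
  ultimately show ?thesis by simp
qed

end
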